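(* Let $(X,\mathcal{O}(X))$ be a measurable space, $\mathcal{A}$ a unital $C^*$-algebra and $\mathcal{H}$ a Hilbert space. Let $\mathcal{I}:\mathcal{O}(X)\to CP(\mathcal{A},\mathcal{B}(\mathcal{H}))$ be a CP instrument with minimal bi-dilation $(\mathcal{K},\pi,E,V)$. Then $\mathcal{I}$ is pure if and only if the spectral instrument $\pi E$ (on $\mathcal{K}$) is irreducible, i.e. $\{\pi(a)E(A):a\in\mathcal{A},A\in\mathcal{O}(X)\}'=\mathbb{C}I_\mathcal{K}$.
   Context: A CP instrument is a map $\mathcal{I}$ from $\mathcal{O}(X)$ to the completely positive maps $\mathcal{A}\to\mathcal{B}(\mathcal{H})$ such that for all $a\in\mathcal{A}$, $h,k\in\mathcal{H}$, $A\mapsto\langle h,\mathcal{I}(A)(a)k\rangle$ is a countably additive complex measure; write $\mathcal{I}(A,a)=\mathcal{I}(A)(a)$. A CP instrument $\mathcal{J}$ is dominated by $\mathcal{I}$ if $\mathcal{I}-\mathcal{J}$ is a CP instrument; $\mathcal{I}$ is pure if every CP instrument $\mathcal{J}:\mathcal{O}(X)\to CP(\mathcal{A},\mathcal{B}(\mathcal{H}))$ dominated by $\mathcal{I}$ equals $t\mathcal{I}$ for some $t\in[0,1]$. A minimal bi-dilation is a quadruple $(\mathcal{K},\pi,E,V)$ with $\pi:\mathcal{A}\to\mathcal{B}(\mathcal{K})$ a unital $*$-homomorphism, $E:\mathcal{O}(X)\to\mathcal{B}(\mathcal{K})$ a spectral measure commuting with $\pi$, $V\in\mathcal{B}(\mathcal{H},\mathcal{K})$,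 with $\mathcal{I}(A,a)=V^*\pi(a)E(A)V$ and $\overline{\mathrm{span}}\{\pi(a)E(A)Vh\}=\mathcal{K}$; it exists and is unique up to unitary equivalence. $\pi E$ denotes the instrument $(A,a)\mapsto\pi(a)E(A)$. *)

theory Defs
  imports "HOL-Analysis.Analysis"
begin

class complex_vector = real_vector +
  fixes scaleC :: "complex \<Rightarrow> 'a \<Rightarrow> 'a" (infixr "*\<^sub>C" 75)
  assumes scaleC_add_right: "c *\<^sub>C (x + y) = c *\<^sub>C x + c *\<^sub>C y"
    and scaleC_add_left: "(b + c) *\<^sub>C x = b *\<^sub>C x + c *\<^sub>C x"
    and scaleC_scaleC: "b *\<^sub>C (c *\<^sub>C x) = (b * c) *\<^sub>C x"
    and scaleC_one: "1 *\<^sub>C x = x"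
    and scaleR_scaleC: "scaleR r x = complex_of_real r *\<^sub>C x"

class complex_inner = complex_vector +
  fixes cinner :: "'a \<Rightarrow> 'a \<Rightarrow> complex"
  assumes cinner_commute: "cinner x y = cnj (cinner y x)"
    and cinner_add_right: "cinner x (y + z) = cinner x y + cinner x z"
    and cinner_scaleC_right: "cinner x (c *\<^sub>C y) = c * cinner x y"
    and cinner_ge_zero: "0 \<le> Re (cinner x x)"
    and cinner_eq_zero_iff: "cinner x x = 0 \<longleftrightarrow> x = 0"

definition cnorm :: "'a::complex_inner \<Rightarrow> real" where
  "cnorm x = sqrt (Re (cinner x x))"

class chilbert_space = complex_inner +
  assumes chilbert_complete:
    "(\<forall>e>0. \<exists>N. \<forall>m\<ge>N. \<forall>n\<ge>N. sqrt (Re (cinner (X m - X n) (X m - X n))) < e)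
       \<Longrightarrow> \<exists>L. (\<lambda>n. sqrt (Re (cinner (X n - L) (X n - L)))) \<longlonglongrightarrow> 0"

class cstar_algebra = complex_vector + ring_1 +
  fixes star :: "'a \<Rightarrow> 'a"
    and anorm :: "'a \<Rightarrow> real"
  assumes mult_scaleC_left: "(c *\<^sub>C a) * b = c *\<^sub>C (a * b)"
    and mult_scaleC_right: "a * (c *\<^sub>C b) = c *\<^sub>C (a * b)"
    and cstar_norm_eq_zero: "anorm a = 0 \<longleftrightarrow> a = 0"
    and cstar_norm_triangle: "anorm (a + b) \<le> anorm a + anorm b"
    and cstar_norm_scaleC: "anorm (c *\<^sub>C a) = cmod c * anorm a"
    and cstar_norm_mult: "anorm (a * b) \<le> anorm a * anorm b"
    and cstar_complete:
      "(\<forall>e>0. \<exists>N. \<forall>m\<ge>N. \<forall>n\<ge>N. anorm (X m - X n) < e)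
         \<Longrightarrow> \<exists>L. (\<lambda>n. anorm (X n - L)) \<longlonglongrightarrow> 0"
    and star_star: "star (star a) = a"
    and star_add: "star (a + b) = star a + star b"
    and star_scaleC: "star (c *\<^sub>C a) = cnj c *\<^sub>C star a"
    and star_mult: "star (a * b) = star b * star a"
    and cstar_identity: "anorm (star a * a) = (anorm a)\<^sup>2"

definition bounded_clinear_op :: "('h::complex_inner \<Rightarrow> 'k::complex_inner) \<Rightarrow> bool" where
  "bounded_clinear_op T \<longleftrightarrow>
     (\<forall>x y. T (x + y) = T x + T y) \<and> (\<forall>c x. T (c *\<^sub>C x) = c *\<^sub>C T x) \<and>
     (\<exists>C. \<forall>x. cnorm (T x) \<le> C * cnorm x)"

definition is_adjoint :: "('k::complex_inner \<Rightarrow> 'h::complex_inner) \<Rightarrow> ('h \<Rightarrow> 'k) \<Rightarrow> bool" where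
  "is_adjoint S T \<longleftrightarrow> (\<forall>x y. cinner (S x) y = cinner x (T y))"

definition cspan :: "'k::complex_vector set \<Rightarrow> 'k set" where
  "cspan S = {x. \<exists>(n::nat) (c::nat \<Rightarrow> complex) (s::nat \<Rightarrow> 'k). (\<forall>i<n. s i \<in> S) \<and> x = (\<Sum>i<n. c i *\<^sub>C s i)}"

definition norm_dense :: "'k::complex_inner set \<Rightarrow> bool" where
  "norm_dense S \<longleftrightarrow> (\<forall>x. \<forall>e>0. \<exists>y\<in>S. cnorm (x - y) < e)"

definition commutant :: "('k::complex_inner \<Rightarrow> 'k) set \<Rightarrow> ('k \<Rightarrow> 'k) set" where
  "commutant S = {T. bounded_clinear_op T \<and> (\<forall>s\<in>S. T \<circ> s = s \<circ> T)}"

text \<open>Complete positivity of a linear map phi : A -> B(H), in the standard Gram form: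
  sum_{i,j} <h_i, phi(a_i^* a_j) h_j> >= 0 for all finite families.\<close>
definition cp_map :: "('a::cstar_algebra \<Rightarrow> 'h::complex_inner \<Rightarrow> 'h) \<Rightarrow> bool" where
  "cp_map \<phi> \<longleftrightarrow>
     (\<forall>a b. \<phi> (a + b) = (\<lambda>x. \<phi> a x + \<phi> b x)) \<and>
     (\<forall>c a. \<phi> (c *\<^sub>C a) = (\<lambda>x. c *\<^sub>C \<phi> a x)) \<and>
     (\<forall>a. bounded_clinear_op (\<phi> a)) \<and>
     (\<forall>(n::nat) (a::nat \<Rightarrow> 'a) (h::nat \<Rightarrow> 'h).
        Im (\<Sum>i<n. \<Sum>j<n. cinner (h i) (\<phi> (star (a i) * a j) (h j))) = 0 \<and>
        0 \<le> Re (\<Sum>i<n. \<Sum>j<n. cinner (h i) (\<phi> (star (a i) * a j) (h j))))"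

definition cp_instrument ::
  "'x measure \<Rightarrow> ('x set \<Rightarrow> 'a::cstar_algebra \<Rightarrow> 'h::complex_inner \<Rightarrow> 'h) \<Rightarrow> bool" where
  "cp_instrument M \<I> \<longleftrightarrow>
     (\<forall>A\<in>sets M. cp_map (\<I> A)) \<and>
     (\<forall>a h k (F::nat \<Rightarrow> 'x set). range F \<subseteq> sets M \<longrightarrow> disjoint_family F \<longrightarrow>
        (\<lambda>n. cinner h (\<I> (F n) a k)) sums cinner h (\<I> (\<Union>n. F n) a k))"

definition dominated_instrument ::
  "'x measure \<Rightarrow> ('x set \<Rightarrow> 'a::cstar_algebra \<Rightarrow> 'h::complex_inner \<Rightarrow> 'h)
     \<Rightarrow> ('x set \<Rightarrow> 'a \<Rightarrow> 'h \<Rightarrow> 'h) \<Rightarrow> bool" where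
  "dominated_instrument M \<J> \<I> \<longleftrightarrow>
     cp_instrument M \<J> \<and> cp_instrument M (\<lambda>A a x. \<I> A a x - \<J> A a x)"

definition pure_instrument ::
  "'x measure \<Rightarrow> ('x set \<Rightarrow> 'a::cstar_algebra \<Rightarrow> 'h::complex_inner \<Rightarrow> 'h) \<Rightarrow> bool" where
  "pure_instrument M \<I> \<longleftrightarrow>
     (\<forall>\<J>. dominated_instrument M \<J> \<I> \<longrightarrow>
        (\<exists>t::real. 0 \<le> t \<and> t \<le> 1 \<and>
           (\<forall>A\<in>sets M. \<forall>a. \<J> A a = (\<lambda>x. complex_of_real t *\<^sub>C \<I> A a x))))"

definition unital_star_hom :: "('a::cstar_algebra \<Rightarrow> 'k::complex_inner \<Rightarrow> 'k) \<Rightarrow> bool" where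
  "unital_star_hom \<pi> \<longleftrightarrow>
     (\<forall>a. bounded_clinear_op (\<pi> a)) \<and>
     (\<forall>a b. \<pi> (a + b) = (\<lambda>x. \<pi> a x + \<pi> b x)) \<and>
     (\<forall>c a. \<pi> (c *\<^sub>C a) = (\<lambda>x. c *\<^sub>C \<pi> a x)) \<and>
     (\<forall>a b. \<pi> (a * b) = \<pi> a \<circ> \<pi> b) \<and>
     \<pi> 1 = id \<and>
     (\<forall>a. is_adjoint (\<pi> (star a)) (\<pi> a))"

definition spectral_measure :: "'x measure \<Rightarrow> ('x set \<Rightarrow> 'k::complex_inner \<Rightarrow> 'k) \<Rightarrow> bool" where
  "spectral_measure M E \<longleftrightarrow>
     (\<forall>A\<in>sets M. bounded_clinear_op (E A) \<and> E A \<circ> E A = E A \<and> is_adjoint (E A) (E A)) \<and>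
     E (space M) = id \<and>
     (\<forall>x y (F::nat \<Rightarrow> 'x set). range F \<subseteq> sets M \<longrightarrow> disjoint_family F \<longrightarrow>
        (\<lambda>n. cinner x (E (F n) y)) sums cinner x (E (\<Union>n. F n) y))"

definition minimal_bidilation ::
  "'x measure \<Rightarrow> ('x set \<Rightarrow> 'a::cstar_algebra \<Rightarrow> 'h::complex_inner \<Rightarrow> 'h)
     \<Rightarrow> ('a \<Rightarrow> 'k::complex_inner \<Rightarrow> 'k) \<Rightarrow> ('x set \<Rightarrow> 'k \<Rightarrow> 'k) \<Rightarrow> ('h \<Rightarrow> 'k) \<Rightarrow> bool" where
  "minimal_bidilation M \<I> \<pi> E V \<longleftrightarrow>
     unital_star_hom \<pi> \<and> spectral_measure M E \<and>
     (\<forall>a. \<forall>A\<in>sets M. \<pi> a \<circ> E A = E A \<circ> \<pi> a) \<and>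
     bounded_clinear_op V \<and>
     (\<forall>A\<in>sets M. \<forall>a h k. cinner h (\<I> A a k) = cinner (V h) (\<pi> a (E A (V k)))) \<and>
     norm_dense (cspan {\<pi> a (E A (V h)) | a A h. A \<in> sets M})"

definition irreducible_spectral_instrument ::
  "'x measure \<Rightarrow> ('a::cstar_algebra \<Rightarrow> 'k::complex_inner \<Rightarrow> 'k) \<Rightarrow> ('x set \<Rightarrow> 'k \<Rightarrow> 'k) \<Rightarrow> bool" where
  "irreducible_spectral_instrument M \<pi> E \<longleftrightarrow>
     commutant {\<pi> a \<circ> E A | a A. A \<in> sets M} = range (\<lambda>c::complex. \<lambda>x. c *\<^sub>C x)"

end

(* A CP instrument J dominated by I is the same thing as an operator 0 \<le> T \<le> 1 in the commutant
   of \<pi> E, through J(A, a) = V\<^sup>* T \<pi>(a) E(A) V.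

   Pure \<Longrightarrow> irreducible: a self-adjoint S in the commutant, rescaled affinely to 0 \<le> R \<le> 1, gives
   the dominated instrument V\<^sup>* R \<pi> E V. Purity makes it t I, and since the vectors \<pi>(a) E(A) V h
   span a dense subspace (minimality), R = t. Every element of the commutant is S1 + i S2 with
   S1, S2 self-adjoint in the commutant, hence scalar.

   Irreducible \<Longrightarrow> pure: for J dominated by I, the Gram sums
   \<Sum> \<langle>h_i, J(A_i \<inter> A_j)(a_i\<^sup>* a_j) h_j\<rangle> of formal combinations of the vectors
   \<pi>(a) E(A) V h are bounded by those of I, i.e. by the norms of the combinations; by polarization
   they define a bounded sesquilinear form on the dense span, hence an operator T. T commutes with
   \<pi> E, so it is a scalar t, and J = t I with 0 \<le> t \<le> 1. *)

theory Submission
  imports Defs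
begin

interpretation complex_vector: vector_space "scaleC :: complex \<Rightarrow> 'a \<Rightarrow> 'a::complex_vector"
  by unfold_locales (simp_all add: scaleC_add_right scaleC_add_left scaleC_scaleC scaleC_one)

lemma scaleC_of_real_eq_scaleR: "complex_of_real r *\<^sub>C x = r *\<^sub>R x"
  by (simp add: scaleR_scaleC)

lemma scaleC_2: "(2::complex) *\<^sub>C x = x + (x::'a::complex_vector)"
  using scaleC_of_real_eq_scaleR[of 2 x] by (simp add: scaleR_2)

lemma self_add_self_eq_0_iff: "x + x = (0::'a::complex_vector) \<longleftrightarrow> x = 0"
  by (metis scaleR_2 scaleR_eq_0_iff zero_neq_numeral)

lemma additive_cinner_right: "Modules.additive (cinner (x::'a::complex_inner))"
  by unfold_locales (rule cinner_add_right)

lemma cinner_add_left: "cinner (x + y) (z::'a::complex_inner) = cinner x z + cinner y z"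
  by (metis cinner_add_right cinner_commute complex_cnj_add)

lemma additive_cinner_left: "Modules.additive (\<lambda>x. cinner x (y::'a::complex_inner))"
  by unfold_locales (rule cinner_add_left)

lemmas cinner_zero_right [simp] = Modules.additive.zero[OF additive_cinner_right]
  and cinner_minus_right = Modules.additive.minus[OF additive_cinner_right]
  and cinner_diff_right = Modules.additive.diff[OF additive_cinner_right]
  and cinner_sum_right = Modules.additive.sum[OF additive_cinner_right]
  and cinner_zero_left [simp] = Modules.additive.zero[OF additive_cinner_left]
  and cinner_minus_left = Modules.additive.minus[OF additive_cinner_left]
  and cinner_diff_left = Modules.additive.diff[OF additive_cinner_left]
  and cinner_sum_left = Modules.additive.sum[OF additive_cinner_left]

lemma cinner_sum_list_left: "cinner (\<Sum>x\<leftarrow>xs. f x) (y::'a::complex_inner) = (\<Sum>x\<leftarrow>xs. cinner (f x) y)"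
  by (induction xs) (simp_all add: cinner_add_left)

lemma cinner_sum_list_right: "cinner (y::'a::complex_inner) (\<Sum>x\<leftarrow>xs. f x) = (\<Sum>x\<leftarrow>xs. cinner y (f x))"
  by (induction xs) (simp_all add: cinner_add_right)

lemma cinner_scaleC_left: "cinner (c *\<^sub>C x) (y::'a::complex_inner) = cnj c * cinner x y"
  by (metis cinner_commute cinner_scaleC_right complex_cnj_mult)

lemma Im_cinner_self [simp]: "Im (cinner x (x::'a::complex_inner)) = 0"
  using arg_cong[OF cinner_commute[of x x], of Im] by simp

lemma cinner_self_real: "cinner x (x::'a::complex_inner) = complex_of_real (Re (cinner x x))"
  by (simp add: complex_eq_iff)

lemma cinner_eqI_right: "(\<And>z. cinner z x = cinner z (y::'a::complex_inner)) \<Longrightarrow> x = y"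
  by (metis cinner_diff_right cinner_eq_zero_iff diff_self eq_iff_diff_eq_0)

lemma cnorm_nonneg [simp]: "0 \<le> cnorm x"
  by (simp add: cnorm_def cinner_ge_zero)

lemma cnorm_square: "(cnorm x)\<^sup>2 = Re (cinner x x)"
  by (simp add: cnorm_def cinner_ge_zero)

lemma cinner_self_cnorm: "cinner x x = complex_of_real ((cnorm x)\<^sup>2)"
  by (metis cinner_self_real cnorm_square)

lemma cnorm_eq_zero_iff [simp]: "cnorm (x::'a::complex_inner) = 0 \<longleftrightarrow> x = 0"
  by (simp add: cinner_self_cnorm flip: cinner_eq_zero_iff)

lemma cnorm_zero [simp]: "cnorm (0::'a::complex_inner) = 0"
  by simp

lemma cnorm_pos_iff: "0 < cnorm (x::'a::complex_inner) \<longleftrightarrow> x \<noteq> 0"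
  using cnorm_nonneg[of x] cnorm_eq_zero_iff[of x] by linarith

lemma cnorm_scaleC: "cnorm (c *\<^sub>C (x::'a::complex_inner)) = cmod c * cnorm x"
proof -
  have "cinner (c *\<^sub>C x) (c *\<^sub>C x) = (cnj c * c) * cinner x x"
    by (simp add: cinner_scaleC_left cinner_scaleC_right mult.assoc)
  also have "cnj c * c = complex_of_real ((cmod c)\<^sup>2)"
    by (metis complex_norm_square mult.commute)
  finally have "Re (cinner (c *\<^sub>C x) (c *\<^sub>C x)) = (cmod c)\<^sup>2 * Re (cinner x x)"
    by (simp del: of_real_power)
  then show ?thesis by (simp add: cnorm_def real_sqrt_mult)
qed

lemma cnorm_minus_commute: "cnorm (x - y::'a::complex_inner) = cnorm (y - x)"
  using cnorm_scaleC[of "-1" "x - y"] by simp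

lemma Re_cinner_sym: "Re (cinner y (x::'a::complex_inner)) = Re (cinner x y)"
  by (metis cinner_commute complex_cnj_cnj cnj.sel(1))

lemma cnorm_add_square:
  "(cnorm (x + y::'a::complex_inner))\<^sup>2 = (cnorm x)\<^sup>2 + 2 * Re (cinner x y) + (cnorm y)\<^sup>2"
  by (simp add: cnorm_square cinner_add_left cinner_add_right Re_cinner_sym[of y x])

lemma cnorm_add_scaleR_square:
  "(cnorm (x + r *\<^sub>R y))\<^sup>2 = (cnorm x)\<^sup>2 + 2 * r * Re (cinner x y) + r\<^sup>2 * (cnorm (y::'a::complex_inner))\<^sup>2"
  unfolding cnorm_add_square
  by (simp add: cnorm_scaleC cinner_scaleC_right power_mult_distrib flip: scaleC_of_real_eq_scaleR)

lemma Re_cinner_le: "Re (cinner x (y::'a::complex_inner)) \<le> cnorm x * cnorm y"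
proof (cases "y = 0")
  case False
  define N where "N = (cnorm y)\<^sup>2"
  define R where "R = Re (cinner x y)"
  have N: "N > 0" using False by (simp add: N_def cnorm_pos_iff)
  have "0 \<le> (cnorm (x + (- R / N) *\<^sub>R y))\<^sup>2" by simp
  also have "\<dots> = (cnorm x)\<^sup>2 + 2 * (- R / N) * R + (- R / N)\<^sup>2 * N"
    unfolding cnorm_add_scaleR_square R_def N_def ..
  also have "\<dots> = (cnorm x)\<^sup>2 - R\<^sup>2 / N"
    using N by (simp add: power2_eq_square field_simps)
  finally have "R\<^sup>2 \<le> (cnorm x)\<^sup>2 * N"
    using N by (simp add: field_simps)
  then have "R\<^sup>2 \<le> (cnorm x * cnorm y)\<^sup>2" by (simp add: N_def power_mult_distrib)
  then show ?thesis unfolding R_def by (rule power2_le_imp_le) simp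
qed simp

lemma cinner_cauchy_schwarz: "cmod (cinner x (y::'a::complex_inner)) \<le> cnorm x * cnorm y"
proof (cases "cinner x y = 0")
  case False
  define z where "z = cinner x y"
  define u where "u = cnj z / cmod z"
  have "cinner x (u *\<^sub>C y) = (cnj z * z) / cmod z"
    by (simp add: u_def z_def cinner_scaleC_right)
  also have "cnj z * z = complex_of_real (cmod z * cmod z)"
    by (metis complex_norm_square mult.commute power2_eq_square)
  finally have "cmod z = Re (cinner x (u *\<^sub>C y))"
    using False by (simp add: z_def)
  also have "\<dots> \<le> cnorm x * cnorm (u *\<^sub>C y)" by (rule Re_cinner_le)
  also have "cnorm (u *\<^sub>C y) = cnorm y" using False by (simp add: u_def z_def cnorm_scaleC norm_divide)
  finally show ?thesis by (simp add: z_def)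
qed simp

lemma cnorm_triangle: "cnorm (x + y::'a::complex_inner) \<le> cnorm x + cnorm y"
proof (rule power2_le_imp_le)
  show "(cnorm (x + y))\<^sup>2 \<le> (cnorm x + cnorm y)\<^sup>2"
    using Re_cinner_le[of x y] unfolding cnorm_add_square power2_sum by linarith
qed simp

lemma cnorm_triangle_diff: "cnorm (x - z::'a::complex_inner) \<le> cnorm (x - y) + cnorm (y - z)"
  using cnorm_triangle[of "x - y" "y - z"] by simp

lemma cnorm_diff_ge: "cnorm x - cnorm y \<le> cnorm (x - y::'a::complex_inner)"
  using cnorm_triangle[of "x - y" y] by simp

lemma parallelogram_law:
  "(cnorm (x + y))\<^sup>2 + (cnorm (x - y))\<^sup>2 = 2 * (cnorm x)\<^sup>2 + 2 * (cnorm (y::'a::complex_inner))\<^sup>2"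
  using cnorm_add_square[of x y] cnorm_add_square[of x "- y"]
  by (simp add: cinner_minus_right cnorm_square cinner_minus_left)

lemma cnorm_scaleC_two: "cnorm ((2::complex) *\<^sub>C x) = 2 * cnorm (x::'a::complex_inner)"
  by (simp add: cnorm_scaleC)

lemma bounded_clinear_opI:
  assumes "\<And>x y. T (x + y) = T x + T y" and "\<And>c x. T (c *\<^sub>C x) = c *\<^sub>C T x"
    and "\<And>x. cnorm (T x) \<le> C * cnorm x"
  shows "bounded_clinear_op T"
  using assms unfolding bounded_clinear_op_def by blast

lemma bounded_clinear_op_add: "bounded_clinear_op T \<Longrightarrow> T (x + y) = T x + T y"
  by (simp add: bounded_clinear_op_def)

lemma bounded_clinear_op_scaleC: "bounded_clinear_op T \<Longrightarrow> T (c *\<^sub>C x) = c *\<^sub>C T x"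
  by (simp add: bounded_clinear_op_def)

lemma bounded_clinear_op_additive: "bounded_clinear_op T \<Longrightarrow> Modules.additive T"
  by unfold_locales (rule bounded_clinear_op_add)

lemmas bounded_clinear_op_zero = Modules.additive.zero[OF bounded_clinear_op_additive]
  and bounded_clinear_op_minus = Modules.additive.minus[OF bounded_clinear_op_additive]
  and bounded_clinear_op_diff = Modules.additive.diff[OF bounded_clinear_op_additive]
  and bounded_clinear_op_sum = Modules.additive.sum[OF bounded_clinear_op_additive]

lemma bounded_clinear_op_pos_bound:
  assumes "bounded_clinear_op T"
  obtains C where "C > 0" and "\<And>x. cnorm (T x) \<le> C * cnorm x"
proof -
  obtain C where C: "\<And>x. cnorm (T x) \<le> C * cnorm x"
    using assms by (auto simp: bounded_clinear_op_def)
  have "C * cnorm x \<le> (\<bar>C\<bar> + 1) * cnorm x" for x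
    by (rule mult_right_mono) auto
  then show thesis using C by (intro that[of "\<bar>C\<bar> + 1"]) (auto intro: order_trans)
qed

lemma bounded_clinear_op_compose:
  assumes S: "bounded_clinear_op S" and T: "bounded_clinear_op T"
  shows "bounded_clinear_op (\<lambda>x. S (T x))"
proof -
  obtain C where C: "C > 0" "\<And>x. cnorm (S x) \<le> C * cnorm x"
    using bounded_clinear_op_pos_bound[OF S] by blast
  obtain D where D: "D > 0" "\<And>x. cnorm (T x) \<le> D * cnorm x"
    using bounded_clinear_op_pos_bound[OF T] by blast
  have "cnorm (S (T x)) \<le> (C * D) * cnorm x" for x
    using C(2)[of "T x"] mult_left_mono[OF D(2)[of x] less_imp_le[OF C(1)]] by (simp add: mult.assoc)
  then show ?thesis
    by (intro bounded_clinear_opI) (simp_all add: S T bounded_clinear_op_add bounded_clinear_op_scaleC)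
qed

lemma bounded_clinear_op_id: "bounded_clinear_op (\<lambda>x. x)"
  by (rule bounded_clinear_opI[where C=1]) auto

lemma bounded_clinear_op_scalar: "bounded_clinear_op (\<lambda>x. c *\<^sub>C (x::'a::complex_inner))"
  by (rule bounded_clinear_opI[where C="cmod c"])
    (auto simp: scaleC_add_right cnorm_scaleC mult.commute)

lemma bounded_clinear_op_add_op:
  assumes S: "bounded_clinear_op S" and T: "bounded_clinear_op T"
  shows "bounded_clinear_op (\<lambda>x. S x + T x)"
proof -
  obtain C where C: "C > 0" "\<And>x. cnorm (S x) \<le> C * cnorm x"
    using bounded_clinear_op_pos_bound[OF S] by blast
  obtain D where D: "D > 0" "\<And>x. cnorm (T x) \<le> D * cnorm x"
    using bounded_clinear_op_pos_bound[OF T] by blast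
  have "cnorm (S x + T x) \<le> (C + D) * cnorm x" for x
    using cnorm_triangle[of "S x" "T x"] C(2)[of x] D(2)[of x] by (simp add: distrib_right)
  then show ?thesis
    by (intro bounded_clinear_opI)
      (simp_all add: S T bounded_clinear_op_add bounded_clinear_op_scaleC scaleC_add_right)
qed

lemma bounded_clinear_op_scaleC_op:
  "bounded_clinear_op T \<Longrightarrow> bounded_clinear_op (\<lambda>x. c *\<^sub>C T x)"
  using bounded_clinear_op_compose[OF bounded_clinear_op_scalar] .

lemma bounded_clinear_op_diff_op:
  assumes "bounded_clinear_op S" and "bounded_clinear_op T"
  shows "bounded_clinear_op (\<lambda>x. S x - T x)"
  using bounded_clinear_op_add_op[OF assms(1) bounded_clinear_op_scaleC_op[OF assms(2), of "-1"]]
  by simp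

section \<open>The Riesz representation theorem\<close>

lemma chilbert_convergentI:
  fixes X :: "nat \<Rightarrow> 'a::chilbert_space"
  assumes g: "g \<longlonglongrightarrow> 0" and X: "\<And>m n. cnorm (X m - X n) \<le> g m + g n"
  shows "\<exists>L. (\<lambda>n. cnorm (X n - L)) \<longlonglongrightarrow> 0"
proof -
  have "\<exists>N. \<forall>m\<ge>N. \<forall>n\<ge>N. cnorm (X m - X n) < e" if "e > 0" for e
  proof -
    obtain N where N: "\<And>n. n \<ge> N \<Longrightarrow> \<bar>g n\<bar> < e / 2"
      using LIMSEQ_D[OF g, of "e / 2"] \<open>e > 0\<close> by auto
    have "cnorm (X m - X n) < e" if "m \<ge> N" "n \<ge> N" for m n
      using X[of m n] N[OF that(1)] N[OF that(2)] by linarith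
    then show ?thesis by blast
  qed
  then show ?thesis using chilbert_complete[of X] by (simp add: cnorm_def)
qed

lemma parallelogram_midpoint:
  fixes x u v :: "'a::complex_inner"
  shows "(cnorm (u - v))\<^sup>2 =
    2 * (cnorm (x - u))\<^sup>2 + 2 * (cnorm (x - v))\<^sup>2 - 4 * (cnorm (x - (1/2) *\<^sub>C (u + v)))\<^sup>2"
proof -
  have "(x - u) + (x - v) = (2::complex) *\<^sub>C (x - (1/2) *\<^sub>C (u + v))"
    by (simp add: complex_vector.scale_right_diff_distrib scaleC_2 algebra_simps)
  then have "(cnorm ((x - u) + (x - v)))\<^sup>2 = 4 * (cnorm (x - (1/2) *\<^sub>C (u + v)))\<^sup>2"
    by (simp add: cnorm_scaleC_two power_mult_distrib)
  then show ?thesis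
    using parallelogram_law[of "x - u" "x - v"] by (simp add: cnorm_minus_commute[of v u])
qed

lemma near_minimizers_close:
  fixes x u v :: "'a::complex_inner"
  assumes "\<delta> \<le> cnorm (x - (1/2) *\<^sub>C (u + v))" and "0 \<le> \<delta>"
    and "cnorm (x - u) \<le> \<delta> + a" and "0 \<le> a" and "a \<le> 1"
    and "cnorm (x - v) \<le> \<delta> + b" and "0 \<le> b" and "b \<le> 1"
  shows "(cnorm (u - v))\<^sup>2 \<le> (4 * \<delta> + 2) * (a + b)"
proof -
  have "(cnorm (u - v))\<^sup>2 \<le> 2 * (\<delta> + a)\<^sup>2 + 2 * (\<delta> + b)\<^sup>2 - 4 * \<delta>\<^sup>2"
    using power_mono[OF assms(1,2), of 2] power_mono[OF assms(3) cnorm_nonneg, of 2]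
      power_mono[OF assms(6) cnorm_nonneg, of 2]
    unfolding parallelogram_midpoint[of u v x] by linarith
  also have "\<dots> = 4 * \<delta> * (a + b) + 2 * (a * a) + 2 * (b * b)"
    by (simp add: power2_eq_square algebra_simps)
  also have "\<dots> \<le> (4 * \<delta> + 2) * (a + b)"
    using mult_left_le_one_le[of a a] mult_left_le_one_le[of b b] assms by (simp add: algebra_simps)
  finally show ?thesis .
qed

lemma nearest_point_exists:
  fixes S :: "'a::chilbert_space set"
  assumes "S \<noteq> {}"
    and midpoint: "\<And>u v. u \<in> S \<Longrightarrow> v \<in> S \<Longrightarrow> (1/2) *\<^sub>C (u + v) \<in> S"
    and closed: "\<And>u L. (\<And>n. u n \<in> S) \<Longrightarrow> (\<lambda>n. cnorm (u n - L)) \<longlonglongrightarrow> 0 \<Longrightarrow> L \<in> S"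
  obtains w where "w \<in> S" and "\<And>v. v \<in> S \<Longrightarrow> cnorm (x - w) \<le> cnorm (x - v)"
proof -
  define \<delta> where "\<delta> = (INF v\<in>S. cnorm (x - v))"
  have bdd: "bdd_below ((\<lambda>v. cnorm (x - v)) ` S)" by (rule bdd_belowI[of _ 0]) auto
  have \<delta>_le: "\<delta> \<le> cnorm (x - v)" if "v \<in> S" for v
    unfolding \<delta>_def using bdd that by (rule cINF_lower)
  have \<delta>_nonneg: "0 \<le> \<delta>" unfolding \<delta>_def using \<open>S \<noteq> {}\<close> by (rule cINF_greatest) simp
  define e :: "nat \<Rightarrow> real" where "e k = inverse (real (Suc k))" for k
  have e: "0 \<le> e k" "e k \<le> 1" for k by (simp_all add: e_def inverse_le_1_iff)
  have "\<exists>v\<in>S. cnorm (x - v) < \<delta> + e k" for k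
    using cINF_less_iff[OF \<open>S \<noteq> {}\<close> bdd, of "\<delta> + e k"] by (simp add: \<delta>_def e_def)
  then obtain u where u: "\<And>k. u k \<in> S" "\<And>k. cnorm (x - u k) < \<delta> + e k" by metis
  define g where "g k = sqrt ((4 * \<delta> + 2) * e k)" for k
  have "(cnorm (u m - u n))\<^sup>2 \<le> (4 * \<delta> + 2) * e m + (4 * \<delta> + 2) * e n" for m n
    using near_minimizers_close[OF \<delta>_le[OF midpoint[OF u(1) u(1)]] \<delta>_nonneg
        less_imp_le[OF u(2)[of m]] e(1,2) less_imp_le[OF u(2)[of n]] e(1,2)]
    by (simp add: distrib_left)
  then have "cnorm (u m - u n) \<le> g m + g n" for m n
    using sqrt_add_le_add_sqrt[of "(4 * \<delta> + 2) * e m" "(4 * \<delta> + 2) * e n"] \<delta>_nonneg e(1)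
      real_sqrt_le_mono[of "(cnorm (u m - u n))\<^sup>2"]
    by (simp add: g_def) (meson order_trans)
  moreover have "g \<longlonglongrightarrow> sqrt ((4 * \<delta> + 2) * 0)"
    unfolding g_def e_def by (intro tendsto_intros LIMSEQ_inverse_real_of_nat)
  ultimately obtain L where L: "(\<lambda>n. cnorm (u n - L)) \<longlonglongrightarrow> 0"
    using chilbert_convergentI[of g u] by auto
  have "cnorm (x - L) \<le> \<delta> + 0 + 0"
  proof (rule LIMSEQ_le_const)
    show "(\<lambda>k. \<delta> + e k + cnorm (u k - L)) \<longlonglongrightarrow> \<delta> + 0 + 0"
      unfolding e_def by (intro tendsto_intros L LIMSEQ_inverse_real_of_nat)
    show "\<exists>N. \<forall>k\<ge>N. cnorm (x - L) \<le> \<delta> + e k + cnorm (u k - L)"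
      using cnorm_triangle_diff[of x L "u _"] u(2) by (meson less_imp_le add_right_mono order_trans)
  qed
  then show thesis
    using closed[OF u(1) L] \<delta>_le by (intro that[of L]) (auto intro: order_trans)
qed

lemma minimal_norm_orthogonal:
  fixes w u :: "'a::complex_inner"
  assumes "\<And>s::real. cnorm w \<le> cnorm (w + s *\<^sub>R u)"
  shows "Re (cinner w u) = 0"
proof -
  define R where "R = Re (cinner w u)"
  define N where "N = (cnorm u)\<^sup>2"
  have N: "0 \<le> N" by (simp add: N_def)
  have "0 \<le> 2 * s * R + s\<^sup>2 * N" for s
    using power_mono[OF assms[of s] cnorm_nonneg, of 2] cnorm_add_scaleR_square[of w s u]
    by (simp add: R_def N_def)
  define t where "t = 1 / (N + 1)"
  have t: "0 < t" "t * N < 2" using N by (simp_all add: t_def field_simps)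
  have "0 \<le> t * (R\<^sup>2 * (t * N - 2))"
    using \<open>0 \<le> 2 * (- t * R) * R + (- t * R)\<^sup>2 * N\<close> by (simp add: power2_eq_square algebra_simps)
  then have "R\<^sup>2 \<le> 0"
    using t by (simp add: zero_le_mult_iff)
  then show ?thesis by (simp add: R_def)
qed

lemma nearest_point_orthogonal:
  fixes K :: "'a::complex_inner set"
  assumes subspace: "\<And>u v c. u \<in> K \<Longrightarrow> v \<in> K \<Longrightarrow> u + c *\<^sub>C v \<in> K"
    and "w \<in> K" and nearest: "\<And>v. v \<in> K \<Longrightarrow> cnorm (x - w) \<le> cnorm (x - v)"
    and "v \<in> K"
  shows "cinner (x - w) v = 0"
proof -
  have "Re (cinner (x - w) (c *\<^sub>C v)) = 0" for c
  proof (rule minimal_norm_orthogonal)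
    fix s :: real
    have "x - (w + (- (complex_of_real s * c)) *\<^sub>C v) = x - w + s *\<^sub>R (c *\<^sub>C v)"
      by (simp flip: scaleC_of_real_eq_scaleR)
    then show "cnorm (x - w) \<le> cnorm (x - w + s *\<^sub>R (c *\<^sub>C v))"
      using nearest[OF subspace[OF \<open>w \<in> K\<close> \<open>v \<in> K\<close>]] by metis
  qed
  from this[of 1] this[of "\<i>"] show ?thesis
    by (simp add: cinner_scaleC_right complex_eq_iff)
qed

lemma bounded_functional_zero_limit:
  fixes f :: "'a::complex_inner \<Rightarrow> complex"
  assumes diff: "\<And>x y. f (x - y) = f x - f y" and bounded: "\<And>x. cmod (f x) \<le> C * cnorm x"
    and zero: "\<And>n. f (u n) = 0" and lim: "(\<lambda>n. cnorm (u n - L)) \<longlonglongrightarrow> 0"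
  shows "f L = 0"
proof -
  have "cmod (f L) \<le> C * 0"
  proof (rule LIMSEQ_le_const)
    show "(\<lambda>n. C * cnorm (u n - L)) \<longlonglongrightarrow> C * 0" by (intro tendsto_intros lim)
    show "\<exists>N. \<forall>n\<ge>N. cmod (f L) \<le> C * cnorm (u n - L)"
      using bounded[of "L - u _"] by (simp add: diff zero cnorm_minus_commute)
  qed
  then show ?thesis by simp
qed

theorem riesz_representation:
  fixes f :: "'a::chilbert_space \<Rightarrow> complex"
  assumes add: "\<And>x y. f (x + y) = f x + f y" and scale: "\<And>c x. f (c *\<^sub>C x) = c * f x"
    and bounded: "\<And>x. cmod (f x) \<le> C * cnorm x"
  obtains z where "\<And>x. f x = cinner z x"
proof (cases "\<forall>x. f x = 0")
  case True
  then show thesis by (intro that[of 0]) simp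
next
  case False
  then obtain x0 where fx0: "f x0 \<noteq> 0" by blast
  interpret f: Modules.additive f by unfold_locales (rule add)
  define K where "K = {v. f v = 0}"
  have subspace: "u + c *\<^sub>C v \<in> K" if "u \<in> K" "v \<in> K" for u v c
    using that by (simp add: K_def add scale)
  have "K \<noteq> {}" by (auto simp: K_def intro: f.zero)
  moreover have "(1/2) *\<^sub>C (u + v) \<in> K" if "u \<in> K" "v \<in> K" for u v
    using that by (simp add: K_def add scale)
  moreover have "L \<in> K" if "\<And>n. u n \<in> K" and "(\<lambda>n. cnorm (u n - L)) \<longlonglongrightarrow> 0" for u L
    using bounded_functional_zero_limit[OF f.diff bounded, of u L] that by (simp add: K_def)
  ultimately obtain L where "L \<in> K" and nearest: "\<And>v. v \<in> K \<Longrightarrow> cnorm (x0 - L) \<le> cnorm (x0 - v)"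
    using nearest_point_exists[of K x0] by blast
  define w where "w = x0 - L"
  have orth: "cinner w v = 0" if "v \<in> K" for v
    unfolding w_def using subspace \<open>L \<in> K\<close> nearest that by (rule nearest_point_orthogonal)
  have fw: "f w = f x0" using \<open>L \<in> K\<close> by (simp add: w_def f.diff K_def)
  then have "cinner w w \<noteq> 0" using fx0 f.zero by (auto simp: cinner_eq_zero_iff)
  have "f x = cinner (cnj (f w / cinner w w) *\<^sub>C w) x" for x
  proof -
    have "x - (f x / f w) *\<^sub>C w \<in> K" using fw fx0 by (simp add: K_def f.diff scale)
    then have "cinner w (x - (f x / f w) *\<^sub>C w) = 0" by (rule orth)
    then show ?thesis
      using \<open>cinner w w \<noteq> 0\<close> fw fx0
      by (simp add: cinner_diff_right cinner_scaleC_right cinner_scaleC_left field_simps)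
  qed
  then show thesis by (rule that)
qed

definition sesquilinear_on ::
    "'a::complex_vector set \<Rightarrow> 'b::complex_vector set \<Rightarrow> ('a \<Rightarrow> 'b \<Rightarrow> complex) \<Rightarrow> bool"
  where "sesquilinear_on D1 D2 \<beta> \<longleftrightarrow>
    (\<forall>x\<in>D1. \<forall>x'\<in>D1. \<forall>y\<in>D2. \<beta> (x + x') y = \<beta> x y + \<beta> x' y) \<and>
    (\<forall>c. \<forall>x\<in>D1. \<forall>y\<in>D2. \<beta> (c *\<^sub>C x) y = cnj c * \<beta> x y) \<and>
    (\<forall>x\<in>D1. \<forall>y\<in>D2. \<forall>y'\<in>D2. \<beta> x (y + y') = \<beta> x y + \<beta> x y') \<and>
    (\<forall>c. \<forall>x\<in>D1. \<forall>y\<in>D2. \<beta> x (c *\<^sub>C y) = c * \<beta> x y)"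

lemma bounded_sesquilinear_representation:
  fixes \<beta> :: "'a::chilbert_space \<Rightarrow> 'b::chilbert_space \<Rightarrow> complex"
  assumes sesq: "sesquilinear_on UNIV UNIV \<beta>"
    and bounded: "\<And>x y. cmod (\<beta> x y) \<le> C * cnorm x * cnorm y"
  shows "\<exists>T. bounded_clinear_op T \<and> (\<forall>x y. \<beta> x y = cinner x (T y))"
proof -
  have "\<exists>z. \<forall>x. \<beta> x y = cinner x z" for y
  proof -
    obtain z where "\<And>x. cnj (\<beta> x y) = cinner z x"
    proof (rule riesz_representation)
      show "cmod (cnj (\<beta> x y)) \<le> (C * cnorm y) * cnorm x" for x
        using bounded[of x y] by (simp add: mult_ac)
    qed (use sesq in \<open>simp_all add: sesquilinear_on_def\<close>)
    then show ?thesis by (metis cinner_commute complex_cnj_cnj)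
  qed
  then obtain T where T: "\<And>x y. \<beta> x y = cinner x (T y)" by metis
  have "cnorm (T y) \<le> max C 0 * cnorm y" for y
  proof (cases "T y = 0")
    case False
    have "(cnorm (T y))\<^sup>2 \<le> cmod (\<beta> (T y) y)"
      by (simp add: T cnorm_square complex_Re_le_cmod)
    also have "\<dots> \<le> cnorm (T y) * (max C 0 * cnorm y)"
      using bounded[of "T y" y] mult_right_mono[of C "max C 0" "cnorm (T y) * cnorm y"]
      by (simp add: mult_ac)
    finally show ?thesis
      using False by (simp add: power2_eq_square cnorm_pos_iff)
  qed simp
  moreover have "T (y + y') = T y + T y'" for y y'
    by (rule cinner_eqI_right) (use sesq in \<open>simp add: sesquilinear_on_def cinner_add_right flip: T\<close>)
  moreover have "T (c *\<^sub>C y) = c *\<^sub>C T y" for c y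
    by (rule cinner_eqI_right) (use sesq in \<open>simp add: sesquilinear_on_def cinner_scaleC_right flip: T\<close>)
  ultimately show ?thesis
    using T by (blast intro: bounded_clinear_opI)
qed

theorem adjoint_exists:
  fixes T :: "'a::chilbert_space \<Rightarrow> 'b::chilbert_space"
  assumes "bounded_clinear_op T"
  shows "\<exists>T'. bounded_clinear_op T' \<and> (\<forall>x y. cinner x (T' y) = cinner (T x) y)"
proof -
  obtain C where C: "C > 0" "\<And>x. cnorm (T x) \<le> C * cnorm x"
    using bounded_clinear_op_pos_bound[OF assms] by blast
  have "cmod (cinner (T x) y) \<le> C * cnorm x * cnorm y" for x y
    using cinner_cauchy_schwarz[of "T x" y] mult_right_mono[OF C(2)[of x] cnorm_nonneg[of y]]
    by linarith
  moreover have "sesquilinear_on UNIV UNIV (\<lambda>x y. cinner (T x) y)"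
    by (simp add: sesquilinear_on_def bounded_clinear_op_add[OF assms]
        bounded_clinear_op_scaleC[OF assms]
        cinner_add_left cinner_add_right cinner_scaleC_left cinner_scaleC_right)
  ultimately show ?thesis
    using bounded_sesquilinear_representation[of "\<lambda>x y. cinner (T x) y" C] by auto
qed

lemma adjoint_commute:
  assumes T': "\<And>x y. cinner x (T' y) = cinner (T x) y"
    and P': "\<And>x y. cinner (P' x) y = cinner x (P y)"
    and TP': "\<And>x. T (P' x) = P' (T x)"
  shows "T' (P x) = P (T' x)"
proof (rule cinner_eqI_right)
  fix y
  have "cinner y (T' (P x)) = cinner (T y) (P x)" by (rule T')
  also have "\<dots> = cinner (T (P' y)) x" by (simp add: P' TP')
  also have "\<dots> = cinner y (P (T' x))" by (simp add: P' flip: T')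
  finally show "cinner y (T' (P x)) = cinner y (P (T' x))" .
qed

lemma cartesian_decomposition:
  assumes "\<And>x y. cinner x (T' y) = cinner (T x) y"
  shows "is_adjoint (\<lambda>x. (1/2) *\<^sub>C (T x + T' x)) (\<lambda>x. (1/2) *\<^sub>C (T x + T' x))"
    and "is_adjoint (\<lambda>x. (- \<i>/2) *\<^sub>C (T x - T' x)) (\<lambda>x. (- \<i>/2) *\<^sub>C (T x - T' x))"
    and "T x = (1/2) *\<^sub>C (T x + T' x) + \<i> *\<^sub>C ((- \<i>/2) *\<^sub>C (T x - T' x))"
proof -
  have T: "cinner (T' x) y = cinner x (T y)" for x y
    by (metis assms cinner_commute)
  show "is_adjoint (\<lambda>x. (1/2) *\<^sub>C (T x + T' x)) (\<lambda>x. (1/2) *\<^sub>C (T x + T' x))"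
    by (simp add: is_adjoint_def cinner_scaleC_left cinner_scaleC_right cinner_add_left
        cinner_add_right assms T)
  show "is_adjoint (\<lambda>x. (- \<i>/2) *\<^sub>C (T x - T' x)) (\<lambda>x. (- \<i>/2) *\<^sub>C (T x - T' x))"
    by (simp add: is_adjoint_def cinner_scaleC_left cinner_scaleC_right cinner_diff_left
        cinner_diff_right assms T algebra_simps)
  have "(1/2::complex) *\<^sub>C (T x + T' x) + \<i> *\<^sub>C ((- \<i>/2) *\<^sub>C (T x - T' x)) = (1/2::complex) *\<^sub>C (T x + T x)"
    by (simp add: algebra_simps)
  then show "T x = (1/2) *\<^sub>C (T x + T' x) + \<i> *\<^sub>C ((- \<i>/2) *\<^sub>C (T x - T' x))"
    by (simp flip: scaleC_2)
qed

lemma selfadjoint_positive_contraction: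
  assumes S: "bounded_clinear_op S" and "is_adjoint S S"
  obtains \<kappa> \<mu> :: real where "\<kappa> \<noteq> 0"
    and "\<And>x. 0 \<le> Re (cinner x (\<kappa> *\<^sub>C (S x + \<mu> *\<^sub>C x)))"
    and "\<And>x. Re (cinner x (\<kappa> *\<^sub>C (S x + \<mu> *\<^sub>C x))) \<le> Re (cinner x x)"
proof -
  obtain C where C: "C > 0" "\<And>x. cnorm (S x) \<le> C * cnorm x"
    using bounded_clinear_op_pos_bound[OF S] by blast
  have S_le: "\<bar>Re (cinner x (S x))\<bar> \<le> C * Re (cinner x x)" for x
  proof -
    have "\<bar>Re (cinner x (S x))\<bar> \<le> cnorm x * cnorm (S x)"
      using cinner_cauchy_schwarz[of x "S x"] abs_Re_le_cmod[of "cinner x (S x)"] by linarith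
    also have "\<dots> \<le> cnorm x * (C * cnorm x)" using C(2) by (intro mult_left_mono) auto
    finally show ?thesis by (simp add: cnorm_square[symmetric] power2_eq_square mult_ac)
  qed
  have R: "Re (cinner x (complex_of_real (1 / (2 * C)) *\<^sub>C (S x + complex_of_real C *\<^sub>C x))) =
      (Re (cinner x (S x)) + C * Re (cinner x x)) / (2 * C)" for x
    by (simp add: cinner_add_right cinner_scaleC_right)
  show thesis
  proof (rule that[of "1 / (2 * C)" C])
    show "0 \<le> Re (cinner x (complex_of_real (1 / (2 * C)) *\<^sub>C (S x + complex_of_real C *\<^sub>C x)))" for x
      unfolding R using S_le[of x] C(1) by (simp add: abs_le_iff)
    show "Re (cinner x (complex_of_real (1 / (2 * C)) *\<^sub>C (S x + complex_of_real C *\<^sub>C x)))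
        \<le> Re (cinner x x)"
      for x unfolding R using S_le[of x] C(1) by (simp add: abs_le_iff pos_divide_le_eq)
  qed (use C in simp)
qed

lemma selfadjoint_Im_cinner:
  assumes "is_adjoint R R"
  shows "Im (cinner x (R x)) = 0"
proof -
  have "cinner x (R x) = cnj (cinner x (R x))"
    using assms cinner_commute[of "R x" x] by (simp add: is_adjoint_def)
  then show ?thesis by (simp add: complex_eq_iff)
qed

section \<open>Extension of bounded forms from dense subspaces\<close>

definition dense_subspace :: "'a::complex_inner set \<Rightarrow> bool" where
  "dense_subspace D \<longleftrightarrow>
     0 \<in> D \<and> (\<forall>x\<in>D. \<forall>y\<in>D. x + y \<in> D) \<and> (\<forall>c. \<forall>x\<in>D. c *\<^sub>C x \<in> D) \<and> norm_dense D"

definition approximates :: "'a::complex_inner set \<Rightarrow> (nat \<Rightarrow> 'a) \<Rightarrow> 'a \<Rightarrow> bool" where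
  "approximates D u x \<longleftrightarrow> (\<forall>n. u n \<in> D) \<and> (\<lambda>n. cnorm (u n - x)) \<longlonglongrightarrow> 0"

lemma dense_subspace_diff: "dense_subspace D \<Longrightarrow> x \<in> D \<Longrightarrow> y \<in> D \<Longrightarrow> x - y \<in> D"
  unfolding dense_subspace_def by (metis complex_vector.scale_minus_left diff_conv_add_uminus scaleC_one)

lemma approximates_exists:
  assumes "dense_subspace D"
  shows "\<exists>u. approximates D u x"
proof -
  have "\<forall>n. \<exists>y\<in>D. cnorm (x - y) < inverse (real (Suc n))"
    using assms by (simp add: dense_subspace_def norm_dense_def)
  then obtain u where u: "\<And>n. u n \<in> D" "\<And>n. cnorm (u n - x) < inverse (real (Suc n))"
    by (metis cnorm_minus_commute)
  have "(\<lambda>n. cnorm (u n - x)) \<longlonglongrightarrow> 0"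
    by (rule Lim_null_comparison[OF _ LIMSEQ_inverse_real_of_nat]) (use u(2) in \<open>simp add: less_imp_le\<close>)
  with u(1) show ?thesis by (auto simp: approximates_def)
qed

lemma approximates_const: "x \<in> D \<Longrightarrow> approximates D (\<lambda>n. x) x"
  by (simp add: approximates_def)

lemma approximates_add:
  assumes "dense_subspace D" "approximates D u x" "approximates D v y"
  shows "approximates D (\<lambda>n. u n + v n) (x + y)"
proof -
  have "(\<lambda>n. cnorm (u n - x) + cnorm (v n - y)) \<longlonglongrightarrow> 0"
    using assms by (auto simp: approximates_def intro: tendsto_add_zero)
  then have "(\<lambda>n. cnorm (u n + v n - (x + y))) \<longlonglongrightarrow> 0"
    by (rule Lim_null_comparison[rotated])
      (use cnorm_triangle[of "u _ - x" "v _ - y"] in \<open>simp add: algebra_simps\<close>)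
  then show ?thesis using assms by (simp add: approximates_def dense_subspace_def)
qed

lemma approximates_scaleC:
  assumes "dense_subspace D" "approximates D u x"
  shows "approximates D (\<lambda>n. c *\<^sub>C u n) (c *\<^sub>C x)"
proof -
  have "(\<lambda>n. cmod c * cnorm (u n - x)) \<longlonglongrightarrow> 0"
    using assms by (auto simp: approximates_def intro: tendsto_mult_right_zero)
  then show ?thesis
    using assms by (simp add: approximates_def dense_subspace_def cnorm_scaleC
        flip: complex_vector.scale_right_diff_distrib)
qed

lemma approximates_cnorm_tendsto:
  assumes "approximates D u x"
  shows "(\<lambda>n. cnorm (u n)) \<longlonglongrightarrow> cnorm x"
proof -
  have bound: "\<bar>cnorm (u n) - cnorm x\<bar> \<le> cnorm (u n - x)" for n
    using cnorm_diff_ge[of "u n" x] cnorm_diff_ge[of x "u n"] cnorm_minus_commute[of x "u n"]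
    unfolding abs_le_iff by linarith
  have "(\<lambda>n. cnorm (u n) - cnorm x) \<longlonglongrightarrow> 0"
    by (rule Lim_null_comparison[of _ "\<lambda>n. cnorm (u n - x)"])
      (use assms bound in \<open>simp_all add: approximates_def\<close>)
  then show ?thesis by (simp add: LIM_zero_iff)
qed

lemma approximates_cnorm_bounded:
  assumes "approximates D u x"
  obtains K where "\<And>n. cnorm (u n) \<le> K"
  using convergent_imp_Bseq[OF convergentI[OF approximates_cnorm_tendsto[OF assms]]]
  by (auto simp: Bseq_def)

lemma Cauchy_if_dist_le_null:
  fixes X :: "nat \<Rightarrow> 'a::metric_space"
  assumes g: "g \<longlonglongrightarrow> 0" and X: "\<And>m n. dist (X m) (X n) \<le> g m + g n"
  shows "Cauchy X"
proof (rule metric_CauchyI)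
  fix e :: real assume "e > 0"
  then obtain N where N: "\<And>n. n \<ge> N \<Longrightarrow> \<bar>g n\<bar> < e / 2"
    using LIMSEQ_D[OF g, of "e / 2"] by auto
  have "dist (X m) (X n) < e" if "m \<ge> N" "n \<ge> N" for m n
    using X[of m n] N[OF that(1)] N[OF that(2)] by linarith
  then show "\<exists>M. \<forall>m\<ge>M. \<forall>n\<ge>M. dist (X m) (X n) < e" by blast
qed

locale dense_bounded_form =
  fixes D1 :: "'a::chilbert_space set" and D2 :: "'b::chilbert_space set"
    and \<beta> :: "'a \<Rightarrow> 'b \<Rightarrow> complex" and C :: real
  assumes dense1: "dense_subspace D1" and dense2: "dense_subspace D2"
    and sesq: "sesquilinear_on D1 D2 \<beta>"
    and bounded: "\<And>x y. x \<in> D1 \<Longrightarrow> y \<in> D2 \<Longrightarrow> cmod (\<beta> x y) \<le> C * cnorm x * cnorm y"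
    and nonneg: "0 \<le> C"
begin

lemma form_diff_le:
  assumes "u \<in> D1" "u' \<in> D1" "v \<in> D2" "v' \<in> D2"
  shows "cmod (\<beta> u v - \<beta> u' v') \<le> C * (cnorm (u - u') * cnorm v + cnorm u' * cnorm (v - v'))"
proof -
  have diff: "u - u' \<in> D1" "v - v' \<in> D2"
    using assms dense1 dense2 by (simp_all add: dense_subspace_diff)
  have "\<beta> ((u - u') + u') v = \<beta> (u - u') v + \<beta> u' v"
    and "\<beta> u' ((v - v') + v') = \<beta> u' (v - v') + \<beta> u' v'"
    using sesq assms diff unfolding sesquilinear_on_def by blast+
  then have "\<beta> u v - \<beta> u' v' = \<beta> (u - u') v + \<beta> u' (v - v')" by simp
  then have "cmod (\<beta> u v - \<beta> u' v') \<le> cmod (\<beta> (u - u') v) + cmod (\<beta> u' (v - v'))"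
    by (simp add: norm_triangle_ineq)
  also have "\<dots> \<le> C * cnorm (u - u') * cnorm v + C * cnorm u' * cnorm (v - v')"
    using assms diff by (intro add_mono bounded)
  finally show ?thesis by (simp add: algebra_simps)
qed

lemma form_diff_le_approx:
  assumes u: "approximates D1 u x" and u': "approximates D1 u' x"
    and v: "approximates D2 v y" and v': "approximates D2 v' y"
    and Kv: "\<And>n. cnorm (v n) \<le> Kv" and Ku: "\<And>n. cnorm (u' n) \<le> Ku"
  shows "cmod (\<beta> (u m) (v m) - \<beta> (u' n) (v' n)) \<le>
    C * ((cnorm (u m - x) + cnorm (u' n - x)) * Kv + Ku * (cnorm (v m - y) + cnorm (v' n - y)))"
proof -
  have "cmod (\<beta> (u m) (v m) - \<beta> (u' n) (v' n)) \<le>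
      C * (cnorm (u m - u' n) * cnorm (v m) + cnorm (u' n) * cnorm (v m - v' n))"
    using u u' v v' by (intro form_diff_le) (auto simp: approximates_def)
  also have "\<dots> \<le> C * ((cnorm (u m - x) + cnorm (u' n - x)) * Kv
      + Ku * (cnorm (v m - y) + cnorm (v' n - y)))"
    using nonneg Kv[of m] Ku[of n] order_trans[OF cnorm_nonneg Ku[of n]]
      cnorm_triangle_diff[of "u m" "u' n" x] cnorm_triangle_diff[of "v m" "v' n" y]
    by (intro mult_left_mono add_mono mult_mono)
        (auto simp: cnorm_minus_commute[of x] cnorm_minus_commute[of y])
  finally show ?thesis .
qed

lemma form_Cauchy:
  assumes u: "approximates D1 u x" and v: "approximates D2 v y"
  shows "Cauchy (\<lambda>n. \<beta> (u n) (v n))"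
proof -
  obtain Ku where Ku: "\<And>n. cnorm (u n) \<le> Ku" using approximates_cnorm_bounded[OF u] by blast
  obtain Kv where Kv: "\<And>n. cnorm (v n) \<le> Kv" using approximates_cnorm_bounded[OF v] by blast
  define g where "g k = C * (cnorm (u k - x) * Kv + Ku * cnorm (v k - y))" for k
  have "g \<longlonglongrightarrow> C * (0 * Kv + Ku * 0)"
    using u v unfolding g_def approximates_def by (intro tendsto_intros) auto
  then have "g \<longlonglongrightarrow> 0" by simp
  moreover have "dist (\<beta> (u m) (v m)) (\<beta> (u n) (v n)) \<le> g m + g n" for m n
    using form_diff_le_approx[OF u u v v Kv Ku, of m n] by (simp add: dist_norm g_def algebra_simps)
  ultimately show ?thesis by (rule Cauchy_if_dist_le_null)
qed

lemma form_diff_tendsto_zero: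
  assumes u: "approximates D1 u x" and u': "approximates D1 u' x"
    and v: "approximates D2 v y" and v': "approximates D2 v' y"
  shows "(\<lambda>n. \<beta> (u n) (v n) - \<beta> (u' n) (v' n)) \<longlonglongrightarrow> 0"
proof -
  obtain Ku where Ku: "\<And>n. cnorm (u' n) \<le> Ku" using approximates_cnorm_bounded[OF u'] by blast
  obtain Kv where Kv: "\<And>n. cnorm (v n) \<le> Kv" using approximates_cnorm_bounded[OF v] by blast
  define g where
    "g n = C * ((cnorm (u n - x) + cnorm (u' n - x)) * Kv
        + Ku * (cnorm (v n - y) + cnorm (v' n - y)))" for n
  have "g \<longlonglongrightarrow> C * ((0 + 0) * Kv + Ku * (0 + 0))"
    using u u' v v' unfolding approximates_def g_def by (intro tendsto_intros) auto
  then have "g \<longlonglongrightarrow> 0" by simp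
  moreover have "\<forall>\<^sub>F n in sequentially. cmod (\<beta> (u n) (v n) - \<beta> (u' n) (v' n)) \<le> g n"
    unfolding g_def using form_diff_le_approx[OF u u' v v' Kv Ku] by simp
  ultimately show ?thesis by (rule Lim_null_comparison[rotated])
qed

definition approx1 :: "'a \<Rightarrow> nat \<Rightarrow> 'a" where "approx1 x = (SOME u. approximates D1 u x)"
definition approx2 :: "'b \<Rightarrow> nat \<Rightarrow> 'b" where "approx2 y = (SOME v. approximates D2 v y)"
definition extension :: "'a \<Rightarrow> 'b \<Rightarrow> complex" where
  "extension x y = lim (\<lambda>n. \<beta> (approx1 x n) (approx2 y n))"

lemma approximates_approx1: "approximates D1 (approx1 x) x"
  using approximates_exists[OF dense1] unfolding approx1_def by (rule someI_ex)

lemma approximates_approx2: "approximates D2 (approx2 y) y"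
  using approximates_exists[OF dense2] unfolding approx2_def by (rule someI_ex)

lemma extension_tendsto:
  assumes u: "approximates D1 u x" and v: "approximates D2 v y"
  shows "(\<lambda>n. \<beta> (u n) (v n)) \<longlonglongrightarrow> extension x y"
proof -
  have "convergent (\<lambda>n. \<beta> (approx1 x n) (approx2 y n))"
    using form_Cauchy[OF approximates_approx1 approximates_approx2] by (simp add: Cauchy_convergent_iff)
  then have "(\<lambda>n. \<beta> (approx1 x n) (approx2 y n)) \<longlonglongrightarrow> extension x y"
    by (simp add: extension_def convergent_LIMSEQ_iff)
  from tendsto_add[OF form_diff_tendsto_zero[OF u approximates_approx1 v approximates_approx2] this]
  show ?thesis by simp
qed

lemma extension_eq: "x \<in> D1 \<Longrightarrow> y \<in> D2 \<Longrightarrow> extension x y = \<beta> x y"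
  using extension_tendsto[OF approximates_const approximates_const] by (simp add: LIMSEQ_const_iff)

lemma extension_bounded: "cmod (extension x y) \<le> C * cnorm x * cnorm y"
proof (rule LIMSEQ_le)
  show "(\<lambda>n. cmod (\<beta> (approx1 x n) (approx2 y n))) \<longlonglongrightarrow> cmod (extension x y)"
    by (intro tendsto_norm extension_tendsto approximates_approx1 approximates_approx2)
  show "(\<lambda>n. C * cnorm (approx1 x n) * cnorm (approx2 y n)) \<longlonglongrightarrow> C * cnorm x * cnorm y"
    by (intro tendsto_intros approximates_cnorm_tendsto[OF approximates_approx1]
        approximates_cnorm_tendsto[OF approximates_approx2])
  show "\<exists>N. \<forall>n\<ge>N. cmod (\<beta> (approx1 x n) (approx2 y n)) \<le> C * cnorm (approx1 x n) * cnorm (approx2 y n)"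
    using approximates_approx1 approximates_approx2 by (auto simp: approximates_def intro!: bounded)
qed

lemma sesquilinear_extension: "sesquilinear_on UNIV UNIV extension"
proof -
  have mem: "approx1 x n \<in> D1" "approx2 y n \<in> D2" for x y n
    using approximates_approx1 approximates_approx2 by (auto simp: approximates_def)
  have lim: "(\<lambda>n. \<beta> (approx1 x n) (approx2 y n)) \<longlonglongrightarrow> extension x y" for x y
    by (intro extension_tendsto approximates_approx1 approximates_approx2)
  have "extension (x + x') y = extension x y + extension x' y" for x x' y
  proof (rule LIMSEQ_unique)
    show "(\<lambda>n. \<beta> (approx1 x n + approx1 x' n) (approx2 y n)) \<longlonglongrightarrow> extension (x + x') y"
      by (intro extension_tendsto approximates_add[OF dense1] approximates_approx1 approximates_approx2)
    show "(\<lambda>n. \<beta> (approx1 x n + approx1 x' n) (approx2 y n)) \<longlonglongrightarrow> extension x y + extension x' y"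
      using tendsto_add[OF lim lim] sesq mem by (simp add: sesquilinear_on_def)
  qed
  moreover have "extension (c *\<^sub>C x) y = cnj c * extension x y" for c x y
  proof (rule LIMSEQ_unique)
    show "(\<lambda>n. \<beta> (c *\<^sub>C approx1 x n) (approx2 y n)) \<longlonglongrightarrow> extension (c *\<^sub>C x) y"
      by (intro extension_tendsto approximates_scaleC[OF dense1]
          approximates_approx1 approximates_approx2)
    show "(\<lambda>n. \<beta> (c *\<^sub>C approx1 x n) (approx2 y n)) \<longlonglongrightarrow> cnj c * extension x y"
      using tendsto_mult[OF tendsto_const lim] sesq mem by (simp add: sesquilinear_on_def)
  qed
  moreover have "extension x (y + y') = extension x y + extension x y'" for x y y'
  proof (rule LIMSEQ_unique)
    show "(\<lambda>n. \<beta> (approx1 x n) (approx2 y n + approx2 y' n)) \<longlonglongrightarrow> extension x (y + y')"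
      by (intro extension_tendsto approximates_add[OF dense2] approximates_approx1 approximates_approx2)
    show "(\<lambda>n. \<beta> (approx1 x n) (approx2 y n + approx2 y' n)) \<longlonglongrightarrow> extension x y + extension x y'"
      using tendsto_add[OF lim lim] sesq mem by (simp add: sesquilinear_on_def)
  qed
  moreover have "extension x (c *\<^sub>C y) = c * extension x y" for c x y
  proof (rule LIMSEQ_unique)
    show "(\<lambda>n. \<beta> (approx1 x n) (c *\<^sub>C approx2 y n)) \<longlonglongrightarrow> extension x (c *\<^sub>C y)"
      by (intro extension_tendsto approximates_scaleC[OF dense2]
          approximates_approx1 approximates_approx2)
    show "(\<lambda>n. \<beta> (approx1 x n) (c *\<^sub>C approx2 y n)) \<longlonglongrightarrow> c * extension x y"
      using tendsto_mult[OF tendsto_const lim] sesq mem by (simp add: sesquilinear_on_def)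
  qed
  ultimately show ?thesis by (simp add: sesquilinear_on_def)
qed

end

theorem dense_form_representation:
  fixes \<beta> :: "'a::chilbert_space \<Rightarrow> 'b::chilbert_space \<Rightarrow> complex"
  assumes "dense_subspace D1" and "dense_subspace D2" and "sesquilinear_on D1 D2 \<beta>"
    and bounded: "\<And>x y. x \<in> D1 \<Longrightarrow> y \<in> D2 \<Longrightarrow> cmod (\<beta> x y) \<le> C * cnorm x * cnorm y"
  shows "\<exists>T. bounded_clinear_op T \<and> (\<forall>x\<in>D1. \<forall>y\<in>D2. \<beta> x y = cinner x (T y))"
proof -
  have "cmod (\<beta> x y) \<le> max C 0 * cnorm x * cnorm y" if "x \<in> D1" "y \<in> D2" for x y
    using bounded[OF that] mult_right_mono[of C "max C 0" "cnorm x * cnorm y"] by (simp add: mult.assoc)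
  then interpret dense_bounded_form D1 D2 \<beta> "max C 0"
    using assms by unfold_locales auto
  show ?thesis
    using bounded_sesquilinear_representation[OF sesquilinear_extension extension_bounded]
    by (metis extension_eq)
qed

lemma cspanE:
  assumes "y \<in> cspan G"
  obtains n c s where "\<And>i. i < n \<Longrightarrow> s i \<in> G" and "y = (\<Sum>i<(n::nat). c i *\<^sub>C s i)"
  using assms unfolding cspan_def by blast

lemma cspan_subset:
  assumes "0 \<in> D" and "\<And>x y. x \<in> D \<Longrightarrow> y \<in> D \<Longrightarrow> x + y \<in> D"
    and "\<And>c x. x \<in> D \<Longrightarrow> c *\<^sub>C x \<in> D" and "G \<subseteq> D"
  shows "cspan G \<subseteq> D"
proof
  fix y assume "y \<in> cspan G"
  then obtain n c s where s: "\<And>i. i < n \<Longrightarrow> s i \<in> G" and y: "y = (\<Sum>i<(n::nat). c i *\<^sub>C s i)"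
    unfolding cspan_def by blast
  have "m \<le> n \<Longrightarrow> (\<Sum>i<m. c i *\<^sub>C s i) \<in> D" for m
  proof (induction m)
    case (Suc m)
    then have "s m \<in> D" using s assms(4) by auto
    with Suc assms(2,3) show ?case by simp
  qed (simp add: assms(1))
  then show "y \<in> D" by (simp add: y)
qed

lemma cinner_cspan_eq_zero:
  assumes "\<And>g. g \<in> G \<Longrightarrow> cinner g x = 0" and "y \<in> cspan G"
  shows "cinner y x = 0"
  using assms(2) by (rule cspanE) (simp add: assms(1) cinner_sum_left cinner_scaleC_left)

lemma bounded_clinear_op_cspan_eq_zero:
  assumes "bounded_clinear_op X" and "\<And>g. g \<in> G \<Longrightarrow> X g = 0" and "y \<in> cspan G"
  shows "X y = 0"
  using assms(3) by (rule cspanE)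
    (simp add: assms(2) bounded_clinear_op_sum[OF assms(1)] bounded_clinear_op_scaleC[OF assms(1)])

lemma dense_span_orthogonal_eq_zero:
  assumes dense: "norm_dense (cspan G)" and orth: "\<And>g. g \<in> G \<Longrightarrow> cinner g x = 0"
  shows "x = 0"
proof (rule ccontr)
  assume "x \<noteq> 0"
  then have pos: "cnorm x > 0" by (simp add: cnorm_pos_iff)
  then obtain y where y: "y \<in> cspan G" "cnorm (x - y) < cnorm x"
    using dense unfolding norm_dense_def by blast
  have "(cnorm x)\<^sup>2 = Re (cinner (x - y) x)"
    using cinner_cspan_eq_zero[OF orth y(1)] by (simp add: cnorm_square cinner_diff_left)
  also have "\<dots> \<le> cnorm (x - y) * cnorm x" by (rule Re_cinner_le)
  also have "\<dots> < cnorm x * cnorm x" using y(2) pos by (intro mult_strict_right_mono)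
  finally show False by (simp add: power2_eq_square)
qed

lemma dense_span_bounded_clinear_op_eq_zero:
  assumes dense: "norm_dense (cspan G)" and X: "bounded_clinear_op X"
    and zero: "\<And>g. g \<in> G \<Longrightarrow> X g = 0"
  shows "X x = 0"
proof (rule ccontr)
  assume "X x \<noteq> 0"
  obtain C where C: "C > 0" "\<And>x. cnorm (X x) \<le> C * cnorm x"
    using bounded_clinear_op_pos_bound[OF X] by blast
  have "cnorm (X x) / C > 0" using \<open>X x \<noteq> 0\<close> C(1) by (simp add: cnorm_pos_iff)
  then obtain y where y: "y \<in> cspan G" "cnorm (x - y) < cnorm (X x) / C"
    using dense unfolding norm_dense_def by blast
  have "cnorm (X x) = cnorm (X (x - y))"
    using bounded_clinear_op_cspan_eq_zero[OF X zero y(1)] by (simp add: bounded_clinear_op_diff[OF X])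
  also have "\<dots> \<le> C * cnorm (x - y)" by (rule C(2))
  also have "\<dots> < cnorm (X x)" using y(2) C(1) by (simp add: field_simps)
  finally show False by simp
qed

definition weakly_countably_additive :: "'x measure \<Rightarrow> ('x set \<Rightarrow> 'k::complex_inner \<Rightarrow> 'k) \<Rightarrow> bool"
  where "weakly_countably_additive M \<Phi> \<longleftrightarrow>
    (\<forall>x y (F::nat \<Rightarrow> 'x set). range F \<subseteq> sets M \<longrightarrow> disjoint_family F \<longrightarrow>
       (\<lambda>n. cinner x (\<Phi> (F n) y)) sums cinner x (\<Phi> (\<Union>n. F n) y))"

context
  fixes M :: "'x measure" and \<Phi> :: "'x set \<Rightarrow> 'k::complex_inner \<Rightarrow> 'k"
  assumes wca: "weakly_countably_additive M \<Phi>"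
begin

lemma weakly_countably_additive_empty: "\<Phi> {} y = 0"
proof -
  have "cinner x (\<Phi> {} y) = 0" for x
  proof -
    have "range (\<lambda>n::nat. {}) \<subseteq> sets M" "disjoint_family (\<lambda>n::nat. {} :: 'x set)"
      by (auto simp: disjoint_family_on_def)
    then have "(\<lambda>n. cinner x (\<Phi> {} y)) sums cinner x (\<Phi> {} y)"
      using wca unfolding weakly_countably_additive_def by fastforce
    then show ?thesis
      using summable_LIMSEQ_zero[of "\<lambda>n. cinner x (\<Phi> {} y)"] by (auto simp: sums_iff LIMSEQ_const_iff)
  qed
  then show ?thesis by (metis cinner_eq_zero_iff)
qed

lemma weakly_countably_additive_Un:
  assumes "A \<in> sets M" "B \<in> sets M" "A \<inter> B = {}"
  shows "\<Phi> (A \<union> B) y = \<Phi> A y + \<Phi> B y"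
proof (rule cinner_eqI_right)
  fix x
  have "range (binaryset A B) \<subseteq> sets M" "disjoint_family (binaryset A B)"
    using assms by (auto simp: range_binaryset_eq disjoint_family_on_def binaryset_def)
  then have "(\<lambda>n. cinner x (\<Phi> (binaryset A B n) y)) sums cinner x (\<Phi> (\<Union>n. binaryset A B n) y)"
    using wca unfolding weakly_countably_additive_def by blast
  then have "(\<lambda>n. cinner x (\<Phi> (binaryset A B n) y)) sums cinner x (\<Phi> (A \<union> B) y)"
    by (simp only: UN_binaryset_eq)
  moreover have "(\<lambda>n. cinner x (\<Phi> (binaryset A B n) y)) sums (cinner x (\<Phi> A y) + cinner x (\<Phi> B y))"
    by (rule binaryset_sums) (simp add: weakly_countably_additive_empty)
  ultimately show "cinner x (\<Phi> (A \<union> B) y) = cinner x (\<Phi> A y + \<Phi> B y)"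
    by (simp add: cinner_add_right sums_unique2)
qed

lemma weakly_countably_additive_finite_UN:
  assumes "finite S" and "\<And>\<sigma>. \<sigma> \<in> S \<Longrightarrow> P \<sigma> \<in> sets M" and "disjoint_family_on P S"
  shows "\<Phi> (\<Union>\<sigma>\<in>S. P \<sigma>) y = (\<Sum>\<sigma>\<in>S. \<Phi> (P \<sigma>) y)"
  using assms
proof (induction S rule: finite_induct)
  case empty
  then show ?case by (simp add: weakly_countably_additive_empty)
next
  case (insert \<tau> S)
  have "P \<tau> \<inter> P \<sigma> = {}" if "\<sigma> \<in> S" for \<sigma>
    using insert.hyps(2) insert.prems(2) that unfolding disjoint_family_on_def by (metis insertCI)
  then have "P \<tau> \<inter> (\<Union>\<sigma>\<in>S. P \<sigma>) = {}" by blast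
  moreover have "(\<Union>\<sigma>\<in>S. P \<sigma>) \<in> sets M"
    using insert.hyps(1) insert.prems(1) by (intro sets.finite_UN) auto
  moreover have "\<Phi> (\<Union>\<sigma>\<in>S. P \<sigma>) y = (\<Sum>\<sigma>\<in>S. \<Phi> (P \<sigma>) y)"
    using insert.IH insert.prems by (auto simp: disjoint_family_on_def)
  ultimately show ?case
    using insert.hyps insert.prems(1)[of \<tau>] weakly_countably_additive_Un[of "P \<tau>" "\<Union>\<sigma>\<in>S. P \<sigma>" y]
    by simp
qed

end

context
  fixes M :: "'x measure" and E :: "'x set \<Rightarrow> 'k::complex_inner \<Rightarrow> 'k"
  assumes E: "spectral_measure M E"
begin

lemma spectral_measure_bounded: "A \<in> sets M \<Longrightarrow> bounded_clinear_op (E A)"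
  using E by (simp add: spectral_measure_def)

lemma spectral_measure_idem:
  assumes "A \<in> sets M"
  shows "E A (E A x) = E A x"
proof -
  have "E A \<circ> E A = E A" using E assms by (simp add: spectral_measure_def)
  then show ?thesis by (metis comp_apply)
qed

lemma spectral_measure_selfadjoint: "A \<in> sets M \<Longrightarrow> cinner (E A x) y = cinner x (E A y)"
  using E by (simp add: spectral_measure_def is_adjoint_def)

lemma spectral_measure_space: "E (space M) x = x"
  using E by (simp add: spectral_measure_def)

lemma spectral_measure_weakly_countably_additive: "weakly_countably_additive M E"
  using E by (simp add: spectral_measure_def weakly_countably_additive_def)

text \<open>\<open>E A + E B\<close> is idempotent, which forces \<open>E A E B = - E B E A\<close>; hence \<open>E A E B\<close>
  equals its own negative.\<close>
lemma spectral_measure_disjoint: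
  assumes A: "A \<in> sets M" and B: "B \<in> sets M" and "A \<inter> B = {}"
  shows "E A (E B x) = 0"
proof -
  note EA = spectral_measure_bounded[OF A] and EB = spectral_measure_bounded[OF B]
  have anti: "E A (E B z) = - E B (E A z)" for z
  proof -
    have "E (A \<union> B) (E (A \<union> B) z) = E (A \<union> B) z"
      using A B by (intro spectral_measure_idem) auto
    then have "E A z + E A (E B z) + (E B (E A z) + E B z) = E A z + E B z"
      using weakly_countably_additive_Un[OF spectral_measure_weakly_countably_additive A B \<open>A \<inter> B = {}\<close>]
      by (simp add: bounded_clinear_op_add[OF EA] bounded_clinear_op_add[OF EB]
          spectral_measure_idem[OF A] spectral_measure_idem[OF B])
    then show ?thesis by (simp add: algebra_simps eq_neg_iff_add_eq_0)
  qed
  have "E A (E B x) = E A (E A (E B x))" by (simp add: spectral_measure_idem[OF A])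
  also have "\<dots> = - E A (E B (E A x))" by (simp add: anti bounded_clinear_op_minus[OF EA])
  also have "\<dots> = - E A (E B x)" by (simp only: anti minus_minus spectral_measure_idem[OF A])
  finally show ?thesis by (simp add: eq_neg_iff_add_eq_0 self_add_self_eq_0_iff)
qed

lemma spectral_measure_Int:
  assumes A: "A \<in> sets M" and B: "B \<in> sets M"
  shows "E A (E B x) = E (A \<inter> B) x"
proof -
  have split: "E C y = E (C \<inter> D) y + E (C - D) y" if "C \<in> sets M" "D \<in> sets M" for C D y
  proof -
    have "E ((C \<inter> D) \<union> (C - D)) y = E (C \<inter> D) y + E (C - D) y"
      using that
          by (intro weakly_countably_additive_Un[OF spectral_measure_weakly_countably_additive]) auto
    then show ?thesis by (simp add: Int_Diff_Un)
  qed
  have "E A (E B x) = E A (E (B \<inter> A) x) + E A (E (B - A) x)"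
    by (simp add: split[OF B A] bounded_clinear_op_add spectral_measure_bounded[OF A])
  also have "E A (E (B - A) x) = 0" using A B by (intro spectral_measure_disjoint) auto
  also have "E A (E (B \<inter> A) x) = E (A \<inter> B) (E (A \<inter> B) x) + E (A - B) (E (A \<inter> B) x)"
    using split[OF A B] by (simp add: Int_commute)
  also have "E (A - B) (E (A \<inter> B) x) = 0" using A B by (intro spectral_measure_disjoint) auto
  finally show ?thesis using A B by (simp add: spectral_measure_idem)
qed
end

lemma star_one [simp]: "star (1::'a::cstar_algebra) = 1"
  by (metis mult.left_neutral mult.right_neutral star_mult star_star)

context
  fixes \<pi> :: "'a::cstar_algebra \<Rightarrow> 'k::complex_inner \<Rightarrow> 'k"
  assumes \<pi>: "unital_star_hom \<pi>"
begin

lemma unital_star_hom_bounded: "bounded_clinear_op (\<pi> a)"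
  using \<pi> by (simp add: unital_star_hom_def)

lemma unital_star_hom_add: "\<pi> (a + b) x = \<pi> a x + \<pi> b x"
  using \<pi> by (simp add: unital_star_hom_def)

lemma unital_star_hom_scaleC: "\<pi> (c *\<^sub>C a) x = c *\<^sub>C \<pi> a x"
  using \<pi> by (simp add: unital_star_hom_def)

lemma unital_star_hom_mult: "\<pi> (a * b) x = \<pi> a (\<pi> b x)"
  using \<pi> by (simp add: unital_star_hom_def)

lemma unital_star_hom_one: "\<pi> 1 x = x"
  using \<pi> by (simp add: unital_star_hom_def)

lemma unital_star_hom_star: "cinner (\<pi> (star a) x) y = cinner x (\<pi> a y)"
  using \<pi> by (simp add: unital_star_hom_def is_adjoint_def)

lemma unital_star_hom_star': "cinner (\<pi> a x) y = cinner x (\<pi> (star a) y)"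
  using unital_star_hom_star[of "star a"] by (simp add: star_star)

end

lemma cp_map_gram_nonneg:
  fixes n :: nat
  assumes "cp_map \<phi>"
  shows "Im (\<Sum>i<n. \<Sum>j<n. cinner (h i) (\<phi> (star (a i) * a j) (h j))) = 0 \<and>
    0 \<le> Re (\<Sum>i<n. \<Sum>j<n. cinner (h i) (\<phi> (star (a i) * a j) (h j)))"
  using assms unfolding cp_map_def by fast

context
  fixes M :: "'x measure" and \<Phi> :: "'x set \<Rightarrow> 'a::cstar_algebra \<Rightarrow> 'h::complex_inner \<Rightarrow> 'h"
  assumes \<Phi>: "cp_instrument M \<Phi>"
begin

lemma cp_instrument_cp_map: "A \<in> sets M \<Longrightarrow> cp_map (\<Phi> A)"
  using \<Phi> by (simp add: cp_instrument_def)

lemma cp_instrument_bounded: "A \<in> sets M \<Longrightarrow> bounded_clinear_op (\<Phi> A a)"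
  using cp_instrument_cp_map by (simp add: cp_map_def)

lemma cp_instrument_weakly_countably_additive: "weakly_countably_additive M (\<lambda>A. \<Phi> A a)"
  using \<Phi> by (simp add: cp_instrument_def weakly_countably_additive_def)

end

lemma cp_instrument_cong:
  assumes "cp_instrument M \<Phi>" and "\<And>A a x. A \<in> sets M \<Longrightarrow> \<Psi> A a x = \<Phi> A a x"
  shows "cp_instrument M \<Psi>"
proof -
  have eq: "\<Psi> A = \<Phi> A" if "A \<in> sets M" for A
    using assms(2)[OF that] by (intro ext) simp
  have "(\<Union>n. F n) \<in> sets M" if "range F \<subseteq> sets M" for F :: "nat \<Rightarrow> _"
    using that by (intro sets.countable_nat_UN) auto
  with assms(1) show ?thesis
    unfolding cp_instrument_def by (auto simp: eq image_subset_iff)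
qed

definition venn_atom :: "'x set \<Rightarrow> (nat \<Rightarrow> 'x set) \<Rightarrow> nat \<Rightarrow> nat set \<Rightarrow> 'x set" where
  "venn_atom \<Omega> A n \<sigma> = {x \<in> \<Omega>. \<forall>i<n. x \<in> A i \<longleftrightarrow> i \<in> \<sigma>}"

lemma sets_venn_atom:
  assumes "\<And>i. i < n \<Longrightarrow> A i \<in> sets M"
  shows "venn_atom (space M) A n \<sigma> \<in> sets M"
proof (cases "n = 0")
  case False
  have "venn_atom (space M) A n \<sigma> = space M \<inter> (\<Inter>i\<in>{..<n}. if i \<in> \<sigma> then A i else space M - A i)"
    unfolding venn_atom_def by (auto split: if_splits)
  moreover have "(\<Inter>i\<in>{..<n}. if i \<in> \<sigma> then A i else space M - A i) \<in> sets M"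
    using False assms by (intro sets.finite_INT) auto
  ultimately show ?thesis by auto
qed (simp add: venn_atom_def)

lemma disjoint_family_venn_atom: "disjoint_family_on (venn_atom \<Omega> A n) (Pow {..<n})"
  unfolding disjoint_family_on_def venn_atom_def by (auto simp: subset_iff)

lemma Int_eq_UN_venn_atom:
  assumes "A i \<subseteq> \<Omega>" and "i < n" and "j < n"
  shows "A i \<inter> A j = (\<Union>\<sigma>\<in>{\<sigma>\<in>Pow {..<n}. i \<in> \<sigma> \<and> j \<in> \<sigma>}. venn_atom \<Omega> A n \<sigma>)"
proof
  show "A i \<inter> A j \<subseteq> (\<Union>\<sigma>\<in>{\<sigma>\<in>Pow {..<n}. i \<in> \<sigma> \<and> j \<in> \<sigma>}. venn_atom \<Omega> A n \<sigma>)"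
  proof
    fix x assume "x \<in> A i \<inter> A j"
    then have "{l. l < n \<and> x \<in> A l} \<in> {\<sigma>\<in>Pow {..<n}. i \<in> \<sigma> \<and> j \<in> \<sigma>}"
      and "x \<in> venn_atom \<Omega> A n {l. l < n \<and> x \<in> A l}"
      using assms by (auto simp: venn_atom_def)
    then show "x \<in> (\<Union>\<sigma>\<in>{\<sigma>\<in>Pow {..<n}. i \<in> \<sigma> \<and> j \<in> \<sigma>}. venn_atom \<Omega> A n \<sigma>)" by blast
  qed
qed (use assms in \<open>auto simp: venn_atom_def\<close>)

lemma cp_instrument_Int_venn_atoms:
  assumes \<Phi>: "cp_instrument M \<Phi>" and A: "\<And>i. i < n \<Longrightarrow> A i \<in> sets M" and "i < n" "j < n"
  shows "cinner (h i) (\<Phi> (A i \<inter> A j) c (h j)) =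
    (\<Sum>\<sigma>\<in>Pow {..<n}. cinner (if i \<in> \<sigma> then h i else 0)
       (\<Phi> (venn_atom (space M) A n \<sigma>) c (if j \<in> \<sigma> then h j else 0)))"
proof -
  let ?S = "{\<sigma>\<in>Pow {..<n}. i \<in> \<sigma> \<and> j \<in> \<sigma>}"
  have "\<Phi> (A i \<inter> A j) c (h j) = \<Phi> (\<Union>\<sigma>\<in>?S. venn_atom (space M) A n \<sigma>) c (h j)"
    using Int_eq_UN_venn_atom[where A=A and \<Omega>="space M" and i=i and j=j and n=n]
      sets.sets_into_space[OF A[OF \<open>i < n\<close>]] \<open>i < n\<close> \<open>j < n\<close> by simp
  also have "\<dots> = (\<Sum>\<sigma>\<in>?S. \<Phi> (venn_atom (space M) A n \<sigma>) c (h j))"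
    by (intro weakly_countably_additive_finite_UN[OF cp_instrument_weakly_countably_additive[OF \<Phi>]]
        sets_venn_atom A disjoint_family_on_mono[OF _ disjoint_family_venn_atom]) auto
  finally have "cinner (h i) (\<Phi> (A i \<inter> A j) c (h j)) =
      (\<Sum>\<sigma>\<in>?S. cinner (h i) (\<Phi> (venn_atom (space M) A n \<sigma>) c (h j)))"
    by (simp only: cinner_sum_right)
  also have "\<dots> = (\<Sum>\<sigma>\<in>Pow {..<n}.
      if i \<in> \<sigma> \<and> j \<in> \<sigma> then cinner (h i) (\<Phi> (venn_atom (space M) A n \<sigma>) c (h j)) else 0)"
    by (rule sum.inter_filter) simp
  also have "\<dots> = (\<Sum>\<sigma>\<in>Pow {..<n}. cinner (if i \<in> \<sigma> then h i else 0)
      (\<Phi> (venn_atom (space M) A n \<sigma>) c (if j \<in> \<sigma> then h j else 0)))"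
    using A by (intro sum.cong)
        (auto simp: bounded_clinear_op_zero cp_instrument_bounded[OF \<Phi>] sets_venn_atom)
  finally show ?thesis .
qed

text \<open>Complete positivity of each \<open>\<Phi> B\<close> only controls Gram sums over a single set \<open>B\<close>; refining
  the sets \<open>A i\<close> into Venn atoms reduces the mixed Gram sum to a sum of such single-set sums.\<close>
theorem cp_instrument_gram_nonneg:
  fixes n :: nat
  assumes \<Phi>: "cp_instrument M \<Phi>" and A: "\<And>i. i < n \<Longrightarrow> A i \<in> sets M"
  shows "Im (\<Sum>i<n. \<Sum>j<n. cinner (h i) (\<Phi> (A i \<inter> A j) (star (a i) * a j) (h j))) = 0 \<and>
    0 \<le> Re (\<Sum>i<n. \<Sum>j<n. cinner (h i) (\<Phi> (A i \<inter> A j) (star (a i) * a j) (h j)))"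
    (is "Im ?G = 0 \<and> 0 \<le> Re ?G")
proof -
  define z where "z \<sigma> = (\<Sum>i<n. \<Sum>j<n. cinner (if i \<in> \<sigma> then h i else 0)
      (\<Phi> (venn_atom (space M) A n \<sigma>) (star (a i) * a j) (if j \<in> \<sigma> then h j else 0)))" for \<sigma>
  have "?G = (\<Sum>i<n. \<Sum>j<n. \<Sum>\<sigma>\<in>Pow {..<n}. cinner (if i \<in> \<sigma> then h i else 0)
      (\<Phi> (venn_atom (space M) A n \<sigma>) (star (a i) * a j) (if j \<in> \<sigma> then h j else 0)))"
    by (intro sum.cong refl cp_instrument_Int_venn_atoms[OF \<Phi> A]) auto
  also have "\<dots> = (\<Sum>i<n. \<Sum>\<sigma>\<in>Pow {..<n}. \<Sum>j<n. cinner (if i \<in> \<sigma> then h i else 0)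
      (\<Phi> (venn_atom (space M) A n \<sigma>) (star (a i) * a j) (if j \<in> \<sigma> then h j else 0)))"
    by (intro sum.cong refl sum.swap)
  also have "\<dots> = (\<Sum>\<sigma>\<in>Pow {..<n}. z \<sigma>)"
    unfolding z_def by (rule sum.swap)
  finally have "?G = (\<Sum>\<sigma>\<in>Pow {..<n}. z \<sigma>)" .
  moreover have "Im (z \<sigma>) = 0 \<and> 0 \<le> Re (z \<sigma>)" for \<sigma>
  proof -
    have "venn_atom (space M) A n \<sigma> \<in> sets M" using A by (rule sets_venn_atom)
    then show ?thesis unfolding z_def by (rule cp_map_gram_nonneg[OF cp_instrument_cp_map[OF \<Phi>]])
  qed
  ultimately show ?thesis by (simp add: sum_nonneg)
qed

text \<open>A list of triples \<open>(a, A, h)\<close> encodes the formal sum of the vectors \<open>\<pi>(a) E(A) V h\<close>;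
  for \<open>\<Phi> = \<I>\<close> its Gram sum is the inner product of these sums (\<open>gram_instrument\<close>).\<close>
definition gram_entry :: "('x set \<Rightarrow> 'a::cstar_algebra \<Rightarrow> 'h::complex_inner \<Rightarrow> 'h) \<Rightarrow>
    'a \<times> 'x set \<times> 'h \<Rightarrow> 'a \<times> 'x set \<times> 'h \<Rightarrow> complex" where
  "gram_entry \<Phi> = (\<lambda>(a, A, h) (b, B, k). cinner h (\<Phi> (A \<inter> B) (star a * b) k))"

definition gram :: "('x set \<Rightarrow> 'a::cstar_algebra \<Rightarrow> 'h::complex_inner \<Rightarrow> 'h) \<Rightarrow>
    ('a \<times> 'x set \<times> 'h) list \<Rightarrow> ('a \<times> 'x set \<times> 'h) list \<Rightarrow> complex" where
  "gram \<Phi> r s = (\<Sum>p\<leftarrow>r. \<Sum>q\<leftarrow>s. gram_entry \<Phi> p q)"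

definition scale_comb :: "complex \<Rightarrow> ('a \<times> 'x set \<times> 'h::complex_vector) list \<Rightarrow> ('a \<times> 'x set \<times> 'h) list"
  where "scale_comb c r = map (\<lambda>(a, A, h). (a, A, c *\<^sub>C h)) r"

lemma gram_append_left: "gram \<Phi> (r @ r') s = gram \<Phi> r s + gram \<Phi> r' s"
  by (simp add: gram_def)

lemma gram_append_right: "gram \<Phi> r (s @ s') = gram \<Phi> r s + gram \<Phi> r s'"
  by (simp add: gram_def sum_list_addf)

lemma gram_scale_left: "gram \<Phi> (scale_comb c r) s = cnj c * gram \<Phi> r s"
  by (simp add: gram_def gram_entry_def scale_comb_def case_prod_beta cinner_scaleC_left
      sum_list_const_mult o_def)

lemma gram_diff: "gram (\<lambda>A a x. \<Phi> A a x - \<Psi> A a x) r s = gram \<Phi> r s - gram \<Psi> r s"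
  by (simp add: gram_def gram_entry_def cinner_diff_right sum_list_subtractf case_prod_beta)

lemma gram_single: "gram \<Phi> [(a, A, h)] [(b, B, k)] = cinner h (\<Phi> (A \<inter> B) (star a * b) k)"
  by (simp add: gram_def gram_entry_def)

lemma sum_list_eq_sum_nth: "(\<Sum>x\<leftarrow>xs. f x) = (\<Sum>i<length xs. f (xs ! i))"
  by (simp add: sum_list_sum_nth atLeast0LessThan)

definition admissible :: "'x measure \<Rightarrow> ('a \<times> 'x set \<times> 'h) list \<Rightarrow> bool" where
  "admissible M r \<longleftrightarrow> (\<forall>(a, A, h)\<in>set r. A \<in> sets M)"

lemma admissible_simps [simp]:
  "admissible M []" "admissible M [(a, A, h)] \<longleftrightarrow> A \<in> sets M"
  "admissible M (r @ s) \<longleftrightarrow> admissible M r \<and> admissible M s"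
  "admissible M (scale_comb c r) \<longleftrightarrow> admissible M r"
  by (auto simp: admissible_def scale_comb_def ball_Un)

lemma gram_scale_right:
  assumes "\<And>A a. A \<in> sets M \<Longrightarrow> bounded_clinear_op (\<Phi> A a)" and "admissible M r" and "admissible M s"
  shows "gram \<Phi> r (scale_comb c s) = c * gram \<Phi> r s"
proof -
  have "gram_entry \<Phi> p (case q of (b, B, k) \<Rightarrow> (b, B, c *\<^sub>C k)) = c * gram_entry \<Phi> p q"
    if "p \<in> set r" "q \<in> set s" for p q
    using assms that unfolding admissible_def
    by (auto simp: gram_entry_def case_prod_beta bounded_clinear_op_scaleC cinner_scaleC_right)
  then show ?thesis
    by (simp add: gram_def scale_comb_def o_def sum_list_const_mult cong: map_cong)
qed

lemma gram_nonneg: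
  assumes "cp_instrument M \<Phi>" and "admissible M r"
  shows "Im (gram \<Phi> r r) = 0 \<and> 0 \<le> Re (gram \<Phi> r r)"
proof -
  have "gram \<Phi> r r = (\<Sum>i<length r. \<Sum>j<length r. cinner (snd (snd (r ! i)))
      (\<Phi> (fst (snd (r ! i)) \<inter> fst (snd (r ! j))) (star (fst (r ! i)) * fst (r ! j))
          (snd (snd (r ! j)))))"
    by (simp add: gram_def gram_entry_def sum_list_eq_sum_nth case_prod_beta)
  moreover have "fst (snd (r ! i)) \<in> sets M" if "i < length r" for i
    using assms(2) nth_mem[OF that] by (auto simp: admissible_def)
  ultimately show ?thesis
    using cp_instrument_gram_nonneg[OF assms(1), of "length r" "\<lambda>i. fst (snd (r ! i))"] by simp
qed

lemma le_four_mult_if_scaled_bound: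
  fixes X a b :: real
  assumes "0 \<le> a" and "0 \<le> b" and scaled: "\<And>t. t > 0 \<Longrightarrow> X \<le> (t * a + b / t)\<^sup>2"
  shows "X \<le> 4 * a * b"
proof -
  have "X \<le> 4 * (a + e) * (b + e)" if "e > 0" for e
  proof -
    define u v where "u = sqrt (a + e)" and "v = sqrt (b + e)"
    have u: "u > 0" "u\<^sup>2 = a + e" and v: "v > 0" "v\<^sup>2 = b + e"
      using assms that by (simp_all add: u_def v_def add_nonneg_pos)
    have "(v / u) * a \<le> (v / u) * u\<^sup>2" using u v that by (intro mult_left_mono) auto
    also have "\<dots> = u * v" using u(1) by (simp add: power2_eq_square)
    finally have "(v / u) * a \<le> u * v" .
    moreover have "b / (v / u) \<le> v\<^sup>2 / (v / u)" using u v that by (intro divide_right_mono) auto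
    moreover have "v\<^sup>2 / (v / u) = u * v" using u(1) v(1) by (simp add: power2_eq_square)
    ultimately have "(v / u) * a + b / (v / u) \<le> 2 * (u * v)" by simp
    then have "((v / u) * a + b / (v / u))\<^sup>2 \<le> (2 * (u * v))\<^sup>2"
      using assms u(1) v(1) by (intro power_mono) auto
    also have "(2 * (u * v))\<^sup>2 = 4 * (a + e) * (b + e)"
      using u v by (simp add: power_mult_distrib)
    finally show ?thesis
      using scaled[of "v / u"] u(1) v(1) by simp
  qed
  moreover have "(\<lambda>n. 4 * (a + inverse (Suc n)) * (b + inverse (Suc n))) \<longlonglongrightarrow> 4 * (a + 0) * (b + 0)"
    by (intro tendsto_intros LIMSEQ_inverse_real_of_nat)
  ultimately show ?thesis
    by (intro LIMSEQ_le_const[where x="4 * (a + 0) * (b + 0)", simplified]) auto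
qed

locale bidilation =
  fixes M :: "'x measure" and I :: "'x set \<Rightarrow> 'a::cstar_algebra \<Rightarrow> 'h::chilbert_space \<Rightarrow> 'h"
    and \<pi> :: "'a \<Rightarrow> 'k::chilbert_space \<Rightarrow> 'k" and E :: "'x set \<Rightarrow> 'k \<Rightarrow> 'k" and V :: "'h \<Rightarrow> 'k"
  assumes minimal: "minimal_bidilation M I \<pi> E V"
begin

lemma unital_star_hom_\<pi>: "unital_star_hom \<pi>"
  using minimal by (simp add: minimal_bidilation_def)

lemma spectral_measure_E: "spectral_measure M E"
  using minimal by (simp add: minimal_bidilation_def)

lemmas \<pi>_bounded = unital_star_hom_bounded[OF unital_star_hom_\<pi>]
  and \<pi>_add = unital_star_hom_add[OF unital_star_hom_\<pi>]
  and \<pi>_scaleC = unital_star_hom_scaleC[OF unital_star_hom_\<pi>]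
  and \<pi>_mult = unital_star_hom_mult[OF unital_star_hom_\<pi>]
  and \<pi>_one = unital_star_hom_one[OF unital_star_hom_\<pi>]
  and \<pi>_star = unital_star_hom_star[OF unital_star_hom_\<pi>]
  and \<pi>_star' = unital_star_hom_star'[OF unital_star_hom_\<pi>]

lemmas E_bounded = spectral_measure_bounded[OF spectral_measure_E]
  and E_idem = spectral_measure_idem[OF spectral_measure_E]
  and E_selfadjoint = spectral_measure_selfadjoint[OF spectral_measure_E]
  and E_space = spectral_measure_space[OF spectral_measure_E]
  and E_weakly_countably_additive = spectral_measure_weakly_countably_additive[OF spectral_measure_E]
  and E_Int = spectral_measure_Int[OF spectral_measure_E]

lemma bounded_V: "bounded_clinear_op V"
  using minimal by (simp add: minimal_bidilation_def)

lemma cinner_instrument: "A \<in> sets M \<Longrightarrow> cinner h (I A a k) = cinner (V h) (\<pi> a (E A (V k)))"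
  using minimal by (simp add: minimal_bidilation_def)

lemma \<pi>_E_commute: "A \<in> sets M \<Longrightarrow> \<pi> a (E A x) = E A (\<pi> a x)"
  using minimal unfolding minimal_bidilation_def by (metis comp_apply)

definition generators :: "'k set" where
  "generators = {\<pi> a (E A (V h)) | a A h. A \<in> sets M}"

lemma dense_generators: "norm_dense (cspan generators)"
  using minimal by (simp add: minimal_bidilation_def generators_def)

lemma generatorsE:
  assumes "g \<in> generators"
  obtains a A h where "A \<in> sets M" and "g = \<pi> a (E A (V h))"
  using assms unfolding generators_def by blast

lemma \<pi>_E_mult:
  assumes "A \<in> sets M" "B \<in> sets M"
  shows "\<pi> b (E B (\<pi> a (E A x))) = \<pi> (b * a) (E (B \<inter> A) x)"
  using assms by (simp add: \<pi>_E_commute \<pi>_mult E_Int)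

lemma cinner_generators:
  assumes "A \<in> sets M" "B \<in> sets M"
  shows "cinner (\<pi> a (E A (V h))) (\<pi> b (E B (V k))) = cinner h (I (A \<inter> B) (star a * b) k)"
proof -
  have "cinner (\<pi> a (E A (V h))) (\<pi> b (E B (V k))) = cinner (V h) (E A (\<pi> (star a) (\<pi> b (E B (V k)))))"
    using assms by (simp add: \<pi>_star' E_selfadjoint)
  also have "\<dots> = cinner h (I (A \<inter> B) (star a * b) k)"
    using assms by (simp add: E_Int cinner_instrument flip: \<pi>_E_commute \<pi>_mult)
  finally show ?thesis .
qed

definition commutes_with_dilation :: "('k \<Rightarrow> 'k) \<Rightarrow> bool" where
  "commutes_with_dilation R \<longleftrightarrow>
     (\<forall>a x. R (\<pi> a x) = \<pi> a (R x)) \<and> (\<forall>A\<in>sets M. \<forall>x. R (E A x) = E A (R x))"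

lemma commutant_iff:
  "T \<in> commutant {\<pi> a \<circ> E A | a A. A \<in> sets M} \<longleftrightarrow> bounded_clinear_op T \<and> commutes_with_dilation T"
proof -
  have "(\<forall>a A. A \<in> sets M \<longrightarrow> T \<circ> (\<pi> a \<circ> E A) = (\<pi> a \<circ> E A) \<circ> T) \<longleftrightarrow> commutes_with_dilation T"
  proof
    assume "\<forall>a A. A \<in> sets M \<longrightarrow> T \<circ> (\<pi> a \<circ> E A) = (\<pi> a \<circ> E A) \<circ> T"
    then have "T (\<pi> a (E A x)) = \<pi> a (E A (T x))" if "A \<in> sets M" for a A x
      using that by (metis comp_apply)
    from this[of "space M"] this[of _ 1] show "commutes_with_dilation T"
      by (simp add: commutes_with_dilation_def E_space \<pi>_one)
  qed (simp add: commutes_with_dilation_def fun_eq_iff)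
  then show ?thesis unfolding commutant_def by blast
qed

lemma commutes_with_dilation_\<pi>: "commutes_with_dilation R \<Longrightarrow> R (\<pi> a x) = \<pi> a (R x)"
  by (simp add: commutes_with_dilation_def)

lemma commutes_with_dilation_E: "commutes_with_dilation R \<Longrightarrow> A \<in> sets M \<Longrightarrow> R (E A x) = E A (R x)"
  by (simp add: commutes_with_dilation_def)

lemma commutes_with_dilation_id: "commutes_with_dilation (\<lambda>x. x)"
  by (simp add: commutes_with_dilation_def)

lemma commutes_with_dilation_add:
  "commutes_with_dilation R \<Longrightarrow> commutes_with_dilation S \<Longrightarrow> commutes_with_dilation (\<lambda>x. R x + S x)"
  by (simp add: commutes_with_dilation_def bounded_clinear_op_add \<pi>_bounded E_bounded)

lemma commutes_with_dilation_diff: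
  "commutes_with_dilation R \<Longrightarrow> commutes_with_dilation S \<Longrightarrow> commutes_with_dilation (\<lambda>x. R x - S x)"
  by (simp add: commutes_with_dilation_def bounded_clinear_op_diff \<pi>_bounded E_bounded)

lemma commutes_with_dilation_scaleC:
  "commutes_with_dilation R \<Longrightarrow> commutes_with_dilation (\<lambda>x. c *\<^sub>C R x)"
  by (simp add: commutes_with_dilation_def bounded_clinear_op_scaleC \<pi>_bounded E_bounded)

lemmas commutes_with_dilation_scalar = commutes_with_dilation_scaleC[OF commutes_with_dilation_id]

text \<open>Minimality of the dilation enters here.\<close>
lemma commuting_operator_eq_zero:
  assumes X: "bounded_clinear_op X" and comm: "commutes_with_dilation X"
    and compressions: "\<And>h a A k. A \<in> sets M \<Longrightarrow> cinner (V h) (X (\<pi> a (E A (V k)))) = 0"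
  shows "X x = 0"
proof (rule dense_span_bounded_clinear_op_eq_zero[OF dense_generators X])
  fix g assume "g \<in> generators"
  then obtain a A k where A: "A \<in> sets M" and g: "g = \<pi> a (E A (V k))" by (rule generatorsE)
  show "X g = 0"
  proof (rule dense_span_orthogonal_eq_zero[OF dense_generators])
    fix g' assume "g' \<in> generators"
    then obtain b B h where B: "B \<in> sets M" and g': "g' = \<pi> b (E B (V h))" by (rule generatorsE)
    have "cinner g' (X g) = cinner (V h) (E B (\<pi> (star b) (X g)))"
      using B by (simp add: g' \<pi>_star' E_selfadjoint)
    also have "E B (\<pi> (star b) (X g)) = X (\<pi> (star b) (E B g))"
      using B by (simp add: commutes_with_dilation_\<pi>[OF comm] commutes_with_dilation_E[OF comm]
          \<pi>_E_commute)
    also have "\<pi> (star b) (E B g) = \<pi> (star b * a) (E (B \<inter> A) (V k))"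
      using A B by (simp add: g \<pi>_E_mult)
    finally show "cinner g' (X g) = 0" using A B by (simp add: compressions)
  qed
qed

section \<open>Pure instruments have irreducible dilations\<close>

definition V_adj :: "'k \<Rightarrow> 'h" where
  "V_adj = (SOME W. bounded_clinear_op W \<and> (\<forall>x y. cinner x (W y) = cinner (V x) y))"

lemma V_adj: "bounded_clinear_op V_adj" "cinner x (V_adj y) = cinner (V x) y"
  using someI_ex[OF adjoint_exists[OF bounded_V]] unfolding V_adj_def by auto

definition compression :: "('k \<Rightarrow> 'k) \<Rightarrow> 'x set \<Rightarrow> 'a \<Rightarrow> 'h \<Rightarrow> 'h" where
  "compression R A a h = V_adj (R (\<pi> a (E A (V h))))"

lemma instrument_eq_compression: "A \<in> sets M \<Longrightarrow> I A a h = compression (\<lambda>x. x) A a h"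
  by (rule cinner_eqI_right) (simp add: compression_def V_adj cinner_instrument)

lemma compression_gram:
  fixes n :: nat
  assumes R: "bounded_clinear_op R" and comm: "commutes_with_dilation R" and A: "A \<in> sets M"
  shows "(\<Sum>i<n. \<Sum>j<n. cinner (h i) (compression R A (star (a i) * a j) (h j))) =
    cinner (\<Sum>j<n. \<pi> (a j) (E A (V (h j)))) (R (\<Sum>j<n. \<pi> (a j) (E A (V (h j)))))"
proof -
  have "cinner (h i) (compression R A (star (a i) * a j) (h j)) =
      cinner (\<pi> (a i) (E A (V (h i)))) (R (\<pi> (a j) (E A (V (h j)))))" for i j
  proof -
    have "cinner (h i) (compression R A (star (a i) * a j) (h j)) =
        cinner (\<pi> (a i) (V (h i))) (R (E A (\<pi> (a j) (V (h j)))))"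
      using A by (simp add: compression_def V_adj commutes_with_dilation_\<pi>[OF comm]
          commutes_with_dilation_E[OF comm] \<pi>_mult \<pi>_E_commute \<pi>_star')
    also have "\<dots> = cinner (\<pi> (a i) (E A (V (h i)))) (R (\<pi> (a j) (E A (V (h j)))))"
      using A by (simp add: commutes_with_dilation_E[OF comm] \<pi>_E_commute E_selfadjoint E_idem)
    finally show ?thesis .
  qed
  then have "(\<Sum>i<n. \<Sum>j<n. cinner (h i) (compression R A (star (a i) * a j) (h j))) =
      (\<Sum>i<n. \<Sum>j<n. cinner (\<pi> (a i) (E A (V (h i)))) (R (\<pi> (a j) (E A (V (h j))))))"
    by simp
  also have "\<dots> = cinner (\<Sum>j<n. \<pi> (a j) (E A (V (h j)))) (R (\<Sum>j<n. \<pi> (a j) (E A (V (h j)))))"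
    unfolding bounded_clinear_op_sum[OF R] by (subst cinner_sum_left) (simp only: cinner_sum_right)
  finally show ?thesis .
qed

lemma cp_instrument_compression:
  assumes R: "bounded_clinear_op R" and "is_adjoint R R" and comm: "commutes_with_dilation R"
    and nonneg: "\<And>x. 0 \<le> Re (cinner x (R x))"
  shows "cp_instrument M (compression R)"
proof -
  have "cp_map (compression R A)" if A: "A \<in> sets M" for A
  proof -
    have "compression R A (a + b) = (\<lambda>h. compression R A a h + compression R A b h)" for a b
      by (simp add: fun_eq_iff compression_def \<pi>_add bounded_clinear_op_add[OF R]
          bounded_clinear_op_add[OF V_adj(1)])
    moreover have "compression R A (c *\<^sub>C a) = (\<lambda>h. c *\<^sub>C compression R A a h)" for c a
      by (simp add: fun_eq_iff compression_def \<pi>_scaleC bounded_clinear_op_scaleC[OF R]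
          bounded_clinear_op_scaleC[OF V_adj(1)])
    moreover have "bounded_clinear_op (compression R A a)" for a
      unfolding compression_def
      by (intro bounded_clinear_op_compose[OF V_adj(1)] bounded_clinear_op_compose[OF R]
          bounded_clinear_op_compose[OF \<pi>_bounded]
          bounded_clinear_op_compose[OF E_bounded[OF A] bounded_V])
    moreover have "Im (\<Sum>i<n. \<Sum>j<n. cinner (h i) (compression R A (star (a i) * a j) (h j))) = 0 \<and>
        0 \<le> Re (\<Sum>i<n. \<Sum>j<n. cinner (h i) (compression R A (star (a i) * a j) (h j)))"
      for n :: nat and a :: "nat \<Rightarrow> 'a" and h :: "nat \<Rightarrow> 'h"
      unfolding compression_gram[OF R comm A]
      using selfadjoint_Im_cinner[OF \<open>is_adjoint R R\<close>] nonneg by simp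
    ultimately show ?thesis unfolding cp_map_def by blast
  qed
  moreover have "cinner h (compression R A a k) = cinner (\<pi> (star a) (R (V h))) (E A (V k))" for h A a k
    using \<open>is_adjoint R R\<close>
    by (simp add: compression_def V_adj is_adjoint_def \<pi>_star flip: commutes_with_dilation_\<pi>[OF comm])
  ultimately show ?thesis
    using E_weakly_countably_additive
    by (simp add: cp_instrument_def weakly_countably_additive_def)
qed

lemma compression_dominated:
  assumes R: "bounded_clinear_op R" and "is_adjoint R R" and comm: "commutes_with_dilation R"
    and nonneg: "\<And>x. 0 \<le> Re (cinner x (R x))" and le: "\<And>x. Re (cinner x (R x)) \<le> Re (cinner x x)"
  shows "dominated_instrument M (compression R) I"
proof -
  have "cp_instrument M (compression (\<lambda>x. x - R x))"
  proof (rule cp_instrument_compression)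
    show "bounded_clinear_op (\<lambda>x. x - R x)" by (intro bounded_clinear_op_diff_op bounded_clinear_op_id R)
    show "is_adjoint (\<lambda>x. x - R x) (\<lambda>x. x - R x)"
      using \<open>is_adjoint R R\<close> by (simp add: is_adjoint_def cinner_diff_left cinner_diff_right)
    show "commutes_with_dilation (\<lambda>x. x - R x)"
      by (intro commutes_with_dilation_diff commutes_with_dilation_id comm)
    show "0 \<le> Re (cinner x (x - R x))" for x using le[of x] by (simp add: cinner_diff_right)
  qed
  then have "cp_instrument M (\<lambda>A a x. I A a x - compression R A a x)"
    by (rule cp_instrument_cong)
      (simp add: instrument_eq_compression compression_def bounded_clinear_op_diff[OF V_adj(1)])
  then show ?thesis
    using cp_instrument_compression[OF assms(1-4)] by (simp add: dominated_instrument_def)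
qed

lemma compression_eq_scalar:
  assumes R: "bounded_clinear_op R" and comm: "commutes_with_dilation R"
    and eq: "\<And>A a. A \<in> sets M \<Longrightarrow> compression R A a = (\<lambda>x. t *\<^sub>C I A a x)"
  shows "R x = t *\<^sub>C x"
proof -
  have "R x - t *\<^sub>C x = 0"
  proof (rule commuting_operator_eq_zero[of "\<lambda>x. R x - t *\<^sub>C x"])
    show "bounded_clinear_op (\<lambda>x. R x - t *\<^sub>C x)"
      by (intro bounded_clinear_op_diff_op R bounded_clinear_op_scalar)
    show "commutes_with_dilation (\<lambda>x. R x - t *\<^sub>C x)"
      by (intro commutes_with_dilation_diff comm commutes_with_dilation_scalar)
    show "cinner (V h) (R (\<pi> a (E A (V k))) - t *\<^sub>C \<pi> a (E A (V k))) = 0" if A: "A \<in> sets M" for h a A k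
    proof -
      have "cinner (V h) (R (\<pi> a (E A (V k)))) = cinner h (compression R A a k)"
        by (simp add: compression_def V_adj)
      also have "\<dots> = t * cinner (V h) (\<pi> a (E A (V k)))"
        using A by (simp add: eq cinner_scaleC_right cinner_instrument)
      finally show ?thesis by (simp add: cinner_diff_right cinner_scaleC_right)
    qed
  qed
  then show ?thesis by simp
qed

lemma pure_selfadjoint_scalar:
  assumes pure: "pure_instrument M I"
    and S: "bounded_clinear_op S" and "is_adjoint S S" and comm: "commutes_with_dilation S"
  shows "\<exists>c. \<forall>x. S x = c *\<^sub>C x"
proof -
  obtain \<kappa> \<mu> :: real where "\<kappa> \<noteq> 0"
    and nonneg: "\<And>x. 0 \<le> Re (cinner x (\<kappa> *\<^sub>C (S x + \<mu> *\<^sub>C x)))"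
    and le: "\<And>x. Re (cinner x (\<kappa> *\<^sub>C (S x + \<mu> *\<^sub>C x))) \<le> Re (cinner x x)"
    using selfadjoint_positive_contraction[OF S \<open>is_adjoint S S\<close>] by blast
  define R where "R x = \<kappa> *\<^sub>C (S x + \<mu> *\<^sub>C x)" for x
  have R: "bounded_clinear_op R"
    unfolding R_def by (intro bounded_clinear_op_scaleC_op bounded_clinear_op_add_op
        S bounded_clinear_op_scalar)
  have "is_adjoint R R"
    using \<open>is_adjoint S S\<close> by (simp add: R_def is_adjoint_def cinner_scaleC_left cinner_scaleC_right
        cinner_add_left cinner_add_right)
  moreover have comm_R: "commutes_with_dilation R"
    unfolding R_def by (intro commutes_with_dilation_scaleC commutes_with_dilation_add
        comm commutes_with_dilation_scalar)
  ultimately have "dominated_instrument M (compression R) I"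
    using R nonneg le by (intro compression_dominated) (simp_all add: R_def)
  then obtain t :: real where t: "\<And>A a. A \<in> sets M \<Longrightarrow> compression R A a = (\<lambda>x. t *\<^sub>C I A a x)"
    using pure unfolding pure_instrument_def by blast
  have "S x = (t / \<kappa> - \<mu>) *\<^sub>C x" for x
  proof -
    have "\<kappa> *\<^sub>C (S x + \<mu> *\<^sub>C x) = t *\<^sub>C x"
      using compression_eq_scalar[OF R comm_R t] by (simp add: R_def)
    then have "(1 / \<kappa>) *\<^sub>C (\<kappa> *\<^sub>C (S x + \<mu> *\<^sub>C x)) = (1 / \<kappa>) *\<^sub>C (t *\<^sub>C x)"
      by simp
    then have "S x + \<mu> *\<^sub>C x = (t / \<kappa>) *\<^sub>C x"
      using \<open>\<kappa> \<noteq> 0\<close> by simp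
    then show ?thesis by (simp add: complex_vector.scale_left_diff_distrib eq_diff_eq)
  qed
  then show ?thesis by blast
qed

lemma commutes_with_dilation_adjoint:
  assumes comm: "commutes_with_dilation T" and T': "\<And>x y. cinner x (T' y) = cinner (T x) y"
  shows "commutes_with_dilation T'"
  unfolding commutes_with_dilation_def
proof (intro conjI allI ballI)
  show "T' (\<pi> a x) = \<pi> a (T' x)" for a x
    using comm by (intro adjoint_commute[OF T', where P'="\<pi> (star a)"])
      (simp_all add: commutes_with_dilation_def \<pi>_star)
  show "T' (E A x) = E A (T' x)" if "A \<in> sets M" for A x
    using comm that by (intro adjoint_commute[OF T', where P'="E A"])
      (simp_all add: commutes_with_dilation_def E_selfadjoint)
qed

lemma pure_commutant_scalar:
  assumes pure: "pure_instrument M I" and T: "bounded_clinear_op T" and comm: "commutes_with_dilation T"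
  shows "\<exists>c. \<forall>x. T x = c *\<^sub>C x"
proof -
  obtain T' where T': "bounded_clinear_op T'" "\<And>x y. cinner x (T' y) = cinner (T x) y"
    using adjoint_exists[OF T] by blast
  have comm': "commutes_with_dilation T'" by (rule commutes_with_dilation_adjoint[OF comm T'(2)])
  define S1 where "S1 x = (1/2) *\<^sub>C (T x + T' x)" for x
  define S2 where "S2 x = (- \<i>/2) *\<^sub>C (T x - T' x)" for x
  have "bounded_clinear_op S1" "bounded_clinear_op S2"
    unfolding S1_def S2_def
    by (intro bounded_clinear_op_scaleC_op bounded_clinear_op_add_op bounded_clinear_op_diff_op T T'(1))+
  moreover have "is_adjoint S1 S1" "is_adjoint S2 S2"
    unfolding S1_def S2_def by (rule cartesian_decomposition[OF T'(2)])+
  moreover have "commutes_with_dilation S1" "commutes_with_dilation S2"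
    unfolding S1_def S2_def
    by (intro commutes_with_dilation_scaleC commutes_with_dilation_add commutes_with_dilation_diff
        comm comm')+
  ultimately obtain c1 c2 where "\<And>x. S1 x = c1 *\<^sub>C x" "\<And>x. S2 x = c2 *\<^sub>C x"
    using pure_selfadjoint_scalar[OF pure] by meson
  moreover have "T x = S1 x + \<i> *\<^sub>C S2 x" for x
    unfolding S1_def S2_def by (rule cartesian_decomposition(3)[OF T'(2)])
  ultimately have "T x = (c1 + \<i> * c2) *\<^sub>C x" for x
    by (simp add: complex_vector.scale_left_distrib)
  then show ?thesis by blast
qed

theorem pure_imp_irreducible:
  assumes "pure_instrument M I"
  shows "irreducible_spectral_instrument M \<pi> E"
proof -
  have "T \<in> range (\<lambda>c x. c *\<^sub>C x)" if T: "T \<in> commutant {\<pi> a \<circ> E A | a A. A \<in> sets M}" for T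
  proof -
    obtain c where "\<And>x. T x = c *\<^sub>C x"
      using pure_commutant_scalar[OF assms] T unfolding commutant_iff by blast
    then have "T = (\<lambda>x. c *\<^sub>C x)" by (rule ext)
    then show ?thesis by (rule image_eqI) simp
  qed
  moreover have "(\<lambda>x. c *\<^sub>C x) \<in> commutant {\<pi> a \<circ> E A | a A. A \<in> sets M}" for c
    unfolding commutant_iff by (simp add: bounded_clinear_op_scalar commutes_with_dilation_scalar)
  ultimately show ?thesis unfolding irreducible_spectral_instrument_def by blast
qed

section \<open>Irreducible dilations give pure instruments\<close>

definition comb :: "('a \<times> 'x set \<times> 'h) list \<Rightarrow> 'k" where
  "comb r = (\<Sum>(a, A, h)\<leftarrow>r. \<pi> a (E A (V h)))"

lemma comb_simps [simp]:
  "comb [] = 0" "comb [(a, A, h)] = \<pi> a (E A (V h))" "comb (r @ s) = comb r + comb s"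
  by (simp_all add: comb_def)

lemma comb_scale: "admissible M r \<Longrightarrow> comb (scale_comb c r) = c *\<^sub>C comb r"
  by (induction r) (auto simp: comb_def scale_comb_def admissible_def scaleC_add_right
      bounded_clinear_op_scaleC bounded_V \<pi>_bounded E_bounded)

lemma gram_instrument:
  assumes "admissible M r" and "admissible M s"
  shows "gram I r s = cinner (comb r) (comb s)"
proof -
  have "gram_entry I p q = cinner (case p of (a, A, h) \<Rightarrow> \<pi> a (E A (V h)))
      (case q of (b, B, k) \<Rightarrow> \<pi> b (E B (V k)))"
    if "p \<in> set r" "q \<in> set s" for p q
    using assms that unfolding admissible_def
        by (auto simp: gram_entry_def case_prod_beta cinner_generators)
  then show ?thesis
    unfolding comb_def cinner_sum_list_left by (simp add: gram_def cinner_sum_list_right cong: map_cong)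
qed

definition combs :: "'k set" where
  "combs = {comb r | r. admissible M r}"

lemma combsI: "admissible M r \<Longrightarrow> comb r \<in> combs"
  unfolding combs_def by blast

lemma dense_subspace_combs: "dense_subspace combs"
proof -
  have zero: "0 \<in> combs" using combsI[of "[]"] by simp
  have add: "x + y \<in> combs" if "x \<in> combs" "y \<in> combs" for x y
    using that combsI[of "_ @ _"] unfolding combs_def by auto
  have scale: "c *\<^sub>C x \<in> combs" if "x \<in> combs" for c x
    using that combsI[of "scale_comb c _"] unfolding combs_def by (auto simp: comb_scale)
  have "generators \<subseteq> combs"
    using combsI[of "[(_, _, _)]"] by (auto elim!: generatorsE)
  with zero add scale have "cspan generators \<subseteq> combs" by (rule cspan_subset)
  then have "norm_dense combs"
    using dense_generators unfolding norm_dense_def by blast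
  with zero add scale show ?thesis unfolding dense_subspace_def by blast
qed

context
  fixes J :: "'x set \<Rightarrow> 'a \<Rightarrow> 'h \<Rightarrow> 'h"
  assumes dominated: "dominated_instrument M J I"
begin

lemma cp_J: "cp_instrument M J"
  using dominated by (simp add: dominated_instrument_def)

lemma bounded_J: "A \<in> sets M \<Longrightarrow> bounded_clinear_op (J A a)"
  by (rule cp_instrument_bounded[OF cp_J])

lemma gram_J_diagonal:
  assumes "admissible M r"
  shows "cmod (gram J r r) \<le> (cnorm (comb r))\<^sup>2"
proof -
  have "0 \<le> Re (gram (\<lambda>A a x. I A a x - J A a x) r r)"
    using gram_nonneg[OF _ assms] dominated by (simp add: dominated_instrument_def)
  then have "Re (gram J r r) \<le> (cnorm (comb r))\<^sup>2"
    by (simp add: gram_diff gram_instrument[OF assms assms] cnorm_square)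
  moreover have "cmod (gram J r r) = Re (gram J r r)"
    using gram_nonneg[OF cp_J assms] by (simp add: cmod_eq_Re)
  ultimately show ?thesis by simp
qed

lemma gram_J_rotation_bound:
  assumes r: "admissible M r" and s: "admissible M s" and "cmod l = 1"
  shows "cmod (gram J (r @ scale_comb l s) (r @ scale_comb l s)) \<le> (cnorm (comb r) + cnorm (comb s))\<^sup>2"
proof -
  have "cmod (gram J (r @ scale_comb l s) (r @ scale_comb l s)) \<le> (cnorm (comb r + l *\<^sub>C comb s))\<^sup>2"
    using gram_J_diagonal[of "r @ scale_comb l s"] r s by (simp add: comb_scale)
  also have "\<dots> \<le> (cnorm (comb r) + cnorm (comb s))\<^sup>2"
    using cnorm_triangle[of "comb r" "l *\<^sub>C comb s"] \<open>cmod l = 1\<close>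
        by (intro power_mono) (simp_all add: cnorm_scaleC)
  finally show ?thesis .
qed

lemma gram_J_polarization:
  assumes r: "admissible M r" and s: "admissible M s"
  shows "cmod (gram J r s) \<le> (cnorm (comb r) + cnorm (comb s))\<^sup>2"
proof -
  define Q where "Q l = gram J (r @ scale_comb l s) (r @ scale_comb l s)" for l
  define B where "B = (cnorm (comb r) + cnorm (comb s))\<^sup>2"
  have Q: "Q l = gram J r r + l * gram J r s + cnj l * gram J s r + cnj l * l * gram J s s" for l
    using r s by (simp add: Q_def gram_append_left gram_append_right gram_scale_left
        gram_scale_right[OF bounded_J])
  have "4 * gram J r s = Q 1 - Q (-1) - \<i> * Q \<i> + \<i> * Q (- \<i>)"
    by (simp add: Q algebra_simps)
  then have "4 * cmod (gram J r s) = cmod (Q 1 - Q (-1) - \<i> * Q \<i> + \<i> * Q (- \<i>))"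
    by (metis norm_mult norm_numeral)
  also have "\<dots> \<le> cmod (Q 1) + cmod (Q (-1)) + cmod (Q \<i>) + cmod (Q (- \<i>))"
    using norm_triangle_ineq4[of "Q 1" "Q (-1)"] norm_triangle_ineq4[of "Q 1 - Q (-1)" "\<i> * Q \<i>"]
      norm_triangle_ineq[of "Q 1 - Q (-1) - \<i> * Q \<i>" "\<i> * Q (- \<i>)"]
    by (simp add: norm_mult)
  also have "\<dots> \<le> B + B + B + B"
    unfolding Q_def B_def by (intro add_mono gram_J_rotation_bound r s) simp_all
  finally show ?thesis by (simp add: B_def)
qed

text \<open>Rescaling \<open>r\<close> by \<open>t\<close> and \<open>s\<close> by \<open>1/t\<close> leaves \<open>gram J r s\<close> unchanged; optimising over \<open>t\<close>
  turns the polarization bound into a bilinear one.\<close>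
lemma gram_J_bound:
  assumes r: "admissible M r" and s: "admissible M s"
  shows "cmod (gram J r s) \<le> 4 * cnorm (comb r) * cnorm (comb s)"
proof (rule le_four_mult_if_scaled_bound)
  fix t :: real assume "t > 0"
  have "gram J (scale_comb t r) (scale_comb (1 / t) s) = gram J r s"
    using \<open>t > 0\<close> r s by (simp add: gram_scale_left gram_scale_right[OF bounded_J])
  moreover have "cnorm (comb (scale_comb t r)) = t * cnorm (comb r)"
    and "cnorm (comb (scale_comb (1 / t) s)) = cnorm (comb s) / t"
    using \<open>t > 0\<close> r s by (simp_all add: comb_scale cnorm_scaleC norm_divide)
  ultimately show "cmod (gram J r s) \<le> (t * cnorm (comb r) + cnorm (comb s) / t)\<^sup>2"
    using gram_J_polarization[of "scale_comb t r" "scale_comb (1 / t) s"] r s by simp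
qed simp_all

lemma gram_J_cong:
  assumes "admissible M r" "admissible M r'" "comb r = comb r'"
    and "admissible M s" "admissible M s'" "comb s = comb s'"
  shows "gram J r s = gram J r' s'"
proof -
  have "comb (r @ scale_comb (-1) r') = 0" "comb (s @ scale_comb (-1) s') = 0"
    using assms by (simp_all add: comb_scale)
  then have "gram J (r @ scale_comb (-1) r') s = 0" "gram J r' (s @ scale_comb (-1) s') = 0"
    using gram_J_bound[of "r @ scale_comb (-1) r'" s] gram_J_bound[of r' "s @ scale_comb (-1) s'"] assms
    by simp_all
  then show ?thesis
    using assms by (simp add: gram_append_left gram_append_right gram_scale_left
        gram_scale_right[OF bounded_J])
qed

definition J_form :: "'k \<Rightarrow> 'k \<Rightarrow> complex" where
  "J_form x y = gram J (SOME r. admissible M r \<and> comb r = x) (SOME s. admissible M s \<and> comb s = y)"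

lemma J_form_comb:
  assumes "admissible M r" and "admissible M s"
  shows "J_form (comb r) (comb s) = gram J r s"
proof -
  let ?r = "SOME r'. admissible M r' \<and> comb r' = comb r"
  let ?s = "SOME s'. admissible M s' \<and> comb s' = comb s"
  have "admissible M ?r \<and> comb ?r = comb r" by (rule someI[where x=r]) (simp add: assms)
  moreover have "admissible M ?s \<and> comb ?s = comb s" by (rule someI[where x=s]) (simp add: assms)
  ultimately show ?thesis
    unfolding J_form_def using assms by (intro gram_J_cong) auto
qed

lemma J_operator_exists:
  "\<exists>T. bounded_clinear_op T \<and> (\<forall>r s. admissible M r \<longrightarrow> admissible M s \<longrightarrow>
      cinner (comb r) (T (comb s)) = gram J r s)"
proof -
  have "sesquilinear_on combs combs J_form"
    unfolding sesquilinear_on_def combs_def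
    by (auto simp: J_form_comb gram_append_left gram_append_right gram_scale_left
        gram_scale_right[OF bounded_J] simp flip: comb_simps(3) comb_scale)
  moreover have "cmod (J_form x y) \<le> 4 * cnorm x * cnorm y" if "x \<in> combs" "y \<in> combs" for x y
    using that unfolding combs_def by (auto simp: J_form_comb gram_J_bound)
  ultimately obtain T where T: "bounded_clinear_op T" "\<forall>x\<in>combs. \<forall>y\<in>combs. J_form x y = cinner x (T y)"
    using dense_form_representation[OF dense_subspace_combs dense_subspace_combs] by blast
  have "cinner (comb r) (T (comb s)) = gram J r s" if "admissible M r" "admissible M s" for r s
    using T(2) combsI[OF that(1)] combsI[OF that(2)] J_form_comb[OF that] by simp
  with T(1) show ?thesis by blast
qed

context
  fixes T :: "'k \<Rightarrow> 'k"
  assumes T: "bounded_clinear_op T"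
    and T_gram: "\<And>r s. admissible M r \<Longrightarrow> admissible M s \<Longrightarrow> cinner (comb r) (T (comb s)) = gram J r s"
begin

lemma J_operator_generators:
  assumes "A \<in> sets M" and "C \<in> sets M"
  shows "cinner (\<pi> a (E A (V h))) (T (\<pi> c (E C (V k)))) = cinner h (J (A \<inter> C) (star a * c) k)"
  using T_gram[of "[(a, A, h)]" "[(c, C, k)]"] assms by (simp add: gram_single)

lemma J_operator_commutes_\<pi>_E:
  assumes B: "B \<in> sets M"
  shows "T (\<pi> b (E B y)) = \<pi> b (E B (T y))"
proof -
  let ?W = "\<lambda>y. T (\<pi> b (E B y)) - \<pi> b (E B (T y))"
  have "?W y = 0"
  proof (rule dense_span_bounded_clinear_op_eq_zero[OF dense_generators, of ?W])
    show "bounded_clinear_op ?W"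
      using B by (intro bounded_clinear_op_diff_op bounded_clinear_op_compose[OF T]
          bounded_clinear_op_compose[OF \<pi>_bounded]
          bounded_clinear_op_compose[OF E_bounded] T bounded_clinear_op_id)
    fix g assume "g \<in> generators"
    then obtain c C k where C: "C \<in> sets M" and g: "g = \<pi> c (E C (V k))" by (rule generatorsE)
    show "?W g = 0"
    proof (rule dense_span_orthogonal_eq_zero[OF dense_generators])
      fix g' assume "g' \<in> generators"
      then obtain a A h where A: "A \<in> sets M" and g': "g' = \<pi> a (E A (V h))" by (rule generatorsE)
      have "cinner g' (T (\<pi> b (E B g))) = cinner h (J (A \<inter> (B \<inter> C)) (star a * (b * c)) k)"
        using A B C by (simp add: g g' \<pi>_E_mult J_operator_generators)
      moreover have "cinner g' (\<pi> b (E B (T g))) = cinner (E B (\<pi> (star b) g')) (T g)"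
        using B by (simp add: \<pi>_star E_selfadjoint)
      moreover have "E B (\<pi> (star b) g') = \<pi> (star b * a) (E (B \<inter> A) (V h))"
        using A B by (simp add: g' E_Int \<pi>_mult
            flip: \<pi>_E_commute)
      moreover have "cinner (\<pi> (star b * a) (E (B \<inter> A) (V h))) (T g) =
          cinner h (J (A \<inter> (B \<inter> C)) (star a * (b * c)) k)"
        using A B C by (simp add: g J_operator_generators Int_ac star_mult star_star mult.assoc)
      ultimately show "cinner g' (?W g) = 0" by (simp add: cinner_diff_right)
    qed
  qed
  then show ?thesis by simp
qed

lemma J_operator_commutes: "commutes_with_dilation T"
  using J_operator_commutes_\<pi>_E[of "space M"] J_operator_commutes_\<pi>_E[where b=1]
  by (simp add: commutes_with_dilation_def E_space \<pi>_one)

end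

lemma dominated_scalar_real:
  assumes JI: "\<And>A a k. A \<in> sets M \<Longrightarrow> J A a k = c *\<^sub>C I A a k"
  shows "\<exists>t::real. 0 \<le> t \<and> t \<le> 1 \<and> (\<forall>A\<in>sets M. \<forall>a. J A a = (\<lambda>x. complex_of_real t *\<^sub>C I A a x))"
proof (cases "\<exists>h. V h \<noteq> 0")
  case True
  then obtain h where "V h \<noteq> 0" by blast
  define N where "N = (cnorm (V h))\<^sup>2"
  have N: "N > 0" using \<open>V h \<noteq> 0\<close> by (simp add: N_def cnorm_pos_iff)
  have "gram J [(1, space M, h)] [(1, space M, h)] = c * N"
    by (simp add: gram_single JI cinner_scaleC_right cinner_instrument \<pi>_one
        E_space cinner_self_cnorm N_def)
  moreover have "comb [(1, space M, h)] = V h"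
    by (simp add: \<pi>_one E_space)
  ultimately have "Im (c * N) = 0" "0 \<le> Re (c * N)" "cmod (c * N) \<le> N"
    using gram_nonneg[OF cp_J, of "[(1, space M, h)]"] gram_J_diagonal[of "[(1, space M, h)]"]
    by (simp_all add: N_def)
  then have "Im c = 0" "0 \<le> Re c" "cmod c \<le> 1"
    using N by (simp_all add: norm_mult zero_le_mult_iff)
  then have "c = complex_of_real (Re c)" "0 \<le> Re c" "Re c \<le> 1"
    using abs_Re_le_cmod[of c] by (simp_all add: complex_eq_iff)
  then obtain t where "c = complex_of_real t" "0 \<le> t" "t \<le> 1" by blast
  then show ?thesis using JI by (intro exI[of _ t]) (simp add: fun_eq_iff)
next
  case False
  then have "I A a k = 0" if "A \<in> sets M" for A a k
    by (intro cinner_eqI_right) (simp add: that cinner_instrument)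
  then show ?thesis using JI by (intro exI[of _ "0::real"]) (simp add: fun_eq_iff)
qed

theorem dominated_eq_scalar_multiple:
  assumes "irreducible_spectral_instrument M \<pi> E"
  shows "\<exists>t::real. 0 \<le> t \<and> t \<le> 1 \<and> (\<forall>A\<in>sets M. \<forall>a. J A a = (\<lambda>x. complex_of_real t *\<^sub>C I A a x))"
proof -
  obtain T where T: "bounded_clinear_op T"
    and T_gram: "\<And>r s. admissible M r \<Longrightarrow> admissible M s \<Longrightarrow> cinner (comb r) (T (comb s)) = gram J r s"
    using J_operator_exists by blast
  then have "T \<in> commutant {\<pi> a \<circ> E A | a A. A \<in> sets M}"
    by (simp add: commutant_iff J_operator_commutes)
  then obtain c where c: "T = (\<lambda>x. c *\<^sub>C x)"
    using assms unfolding irreducible_spectral_instrument_def by blast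
  have "J A a k = c *\<^sub>C I A a k" if "A \<in> sets M" for A a k
  proof (rule cinner_eqI_right)
    fix h
    have "cinner h (J A a k) = cinner (V h) (T (\<pi> a (E A (V k))))"
      using J_operator_generators[OF T T_gram, of "space M" A 1 h a k] that
      by (simp add: \<pi>_one E_space)
    then show "cinner h (J A a k) = cinner h (c *\<^sub>C I A a k)"
      using that by (simp add: c cinner_scaleC_right cinner_instrument)
  qed
  then show ?thesis by (rule dominated_scalar_real)
qed

end

theorem irreducible_imp_pure:
  assumes "irreducible_spectral_instrument M \<pi> E"
  shows "pure_instrument M I"
  unfolding pure_instrument_def using dominated_eq_scalar_multiple[OF _ assms] by blast

theorem pure_iff_irreducible: "pure_instrument M I \<longleftrightarrow> irreducible_spectral_instrument M \<pi> E"
  using pure_imp_irreducible irreducible_imp_pure by blast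

end

theorem proposition2p19:
  fixes M :: "'x measure"
    and \<I> :: "'x set \<Rightarrow> 'a::cstar_algebra \<Rightarrow> 'h::chilbert_space \<Rightarrow> 'h"
    and \<pi> :: "'a \<Rightarrow> 'k::chilbert_space \<Rightarrow> 'k"
    and E :: "'x set \<Rightarrow> 'k \<Rightarrow> 'k"
    and V :: "'h \<Rightarrow> 'k"
  assumes "cp_instrument M \<I>"
    and "minimal_bidilation M \<I> \<pi> E V"
  shows "pure_instrument M \<I> \<longleftrightarrow> irreducible_spectral_instrument M \<pi> E"
proof -
  interpret bidilation M \<I> \<pi> E V by unfold_locales (fact assms(2))
  show ?thesis by (rule pure_iff_irreducible)
qed

end
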